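(* Suppose $E_S$ carries an $S[T;f]$-module structure for which $E_S$ is $T$-torsion-free (i.e., $Tm=0$ implies $m=0$). Then an ideal $L\subseteq R$ containing $I$ is an $E_S$-ideal if and only if $LS$ is an $E_S$-special ideal of $S$.
   Context: Let $p$ be a prime, $(R,\mathfrak m)$ a complete regular local ring of characteristic $p$, $E$ the injective hull of $R/\mathfrak m$. Fix an ideal $I\subseteq R$, $S=R/I$, $E_S=\operatorname{Ann}_EI$. $S[T;f]$ is the skew polynomial ring $\bigoplus_iST^i$ with $Ts=s^pT$. An ideal $L\subseteq R$ is an $E_S$-ideal if $I\subseteq L$ and $\operatorname{Ann}_{E_S}L$ is an $S[T;f]$-submodule of $E_S$. A graded two-sided ideal of $S[T;f]$ is one of the form $\bigoplus_iK_iT^i$ with $K_i$ ideals of $S$. For an $S[T;f]$-module $G$ and submodule $M$, $\operatorname{grAnn}M$ is the largest graded two-sided ideal contained in $\operatorname{Ann}_{S[T;f]}M$. An ideal $L'\subseteq S$ is $G$-special if $L'S[T;f]=\operatorname{grAnn}M$ for some $S[T;f]$-submodule $M\subseteq G$. *)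

theory Defs
  imports Main "HOL.Modules" "HOL-Computational_Algebra.Primes"
begin

definition is_ideal :: "'a::comm_ring_1 set \<Rightarrow> bool" where
  "is_ideal J \<longleftrightarrow> 0 \<in> J \<and> (\<forall>x\<in>J. \<forall>y\<in>J. x + y \<in> J) \<and> (\<forall>r x. x \<in> J \<longrightarrow> r * x \<in> J)"

definition ideal_gen :: "'a::comm_ring_1 set \<Rightarrow> 'a set" where
  "ideal_gen F = \<Inter>{J. is_ideal J \<and> F \<subseteq> J}"

definition is_maximal_ideal :: "'a::comm_ring_1 set \<Rightarrow> bool" where
  "is_maximal_ideal M \<longleftrightarrow> is_ideal M \<and> M \<noteq> UNIV \<and>
     (\<forall>J. is_ideal J \<and> M \<subseteq> J \<longrightarrow> J = M \<or> J = UNIV)"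

definition is_prime_ideal :: "'a::comm_ring_1 set \<Rightarrow> bool" where
  "is_prime_ideal P \<longleftrightarrow> is_ideal P \<and> P \<noteq> UNIV \<and> (\<forall>a b. a * b \<in> P \<longrightarrow> a \<in> P \<or> b \<in> P)"

definition local_ring_with :: "'a::comm_ring_1 set \<Rightarrow> bool" where
  "local_ring_with m \<longleftrightarrow> is_maximal_ideal m \<and> (\<forall>M. is_maximal_ideal M \<longrightarrow> M = m)"

definition noetherian_ring :: "'a::comm_ring_1 itself \<Rightarrow> bool" where
  "noetherian_ring _ \<longleftrightarrow> (\<forall>J::'a set. is_ideal J \<longrightarrow> (\<exists>F. finite F \<and> J = ideal_gen F))"

definition prime_chain :: "(nat \<Rightarrow> 'a::comm_ring_1 set) \<Rightarrow> nat \<Rightarrow> bool" where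
  "prime_chain P d \<longleftrightarrow> (\<forall>i\<le>d. is_prime_ideal (P i)) \<and> (\<forall>i<d. P i \<subset> P (Suc i))"

definition krull_dim_eq :: "'a::comm_ring_1 itself \<Rightarrow> nat \<Rightarrow> bool" where
  "krull_dim_eq _ d \<longleftrightarrow> (\<exists>P::nat \<Rightarrow> 'a set. prime_chain P d) \<and>
      \<not> (\<exists>P::nat \<Rightarrow> 'a set. prime_chain P (Suc d))"

definition regular_local_with :: "'a::comm_ring_1 set \<Rightarrow> bool" where
  "regular_local_with m \<longleftrightarrow> local_ring_with m \<and> noetherian_ring TYPE('a) \<and>
     (\<exists>d. krull_dim_eq TYPE('a) d \<and> (\<exists>F. finite F \<and> card F = d \<and> m = ideal_gen F))"

definition ideal_pow :: "'a::comm_ring_1 set \<Rightarrow> nat \<Rightarrow> 'a set" where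
  "ideal_pow J k = ideal_gen {prod_list xs | xs. length xs = k \<and> set xs \<subseteq> J}"

definition madic_complete :: "'a::comm_ring_1 set \<Rightarrow> bool" where
  "madic_complete m \<longleftrightarrow>
     (\<Inter>k. ideal_pow m k) = {0} \<and>
     (\<forall>x::nat \<Rightarrow> 'a. (\<forall>k. \<exists>N. \<forall>n\<ge>N. \<forall>n'\<ge>N. x n - x n' \<in> ideal_pow m k) \<longrightarrow>
        (\<exists>y. \<forall>k. \<exists>N. \<forall>n\<ge>N. x n - y \<in> ideal_pow m k))"

definition complete_regular_local_with :: "'a::comm_ring_1 set \<Rightarrow> bool" where
  "complete_regular_local_with m \<longleftrightarrow> regular_local_with m \<and> madic_complete m"

definition submod :: "('a::comm_ring_1 \<Rightarrow> 'e::ab_group_add \<Rightarrow> 'e) \<Rightarrow> 'e set \<Rightarrow> bool" where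
  "submod sc N \<longleftrightarrow> 0 \<in> N \<and> (\<forall>x\<in>N. \<forall>y\<in>N. x + y \<in> N) \<and> (\<forall>r. \<forall>x\<in>N. sc r x \<in> N)"

text \<open>Injectivity (via Baer's criterion).\<close>
definition injective_mod :: "('a::comm_ring_1 \<Rightarrow> 'e::ab_group_add \<Rightarrow> 'e) \<Rightarrow> bool" where
  "injective_mod sc \<longleftrightarrow>
     (\<forall>J g. is_ideal J \<and> (\<forall>x\<in>J. \<forall>y\<in>J. g (x + y) = g x + g y) \<and> (\<forall>r. \<forall>x\<in>J. g (r * x) = sc r (g x))
        \<longrightarrow> (\<exists>e. \<forall>x\<in>J. g x = sc x e))"

text \<open>E is an injective hull of R/m: E injective, and R/m embeds (as the cyclic submodule
  generated by some u with annihilator m) as an essential submodule.\<close>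
definition injective_hull_residue :: "('a::comm_ring_1 \<Rightarrow> 'e::ab_group_add \<Rightarrow> 'e) \<Rightarrow> 'a set \<Rightarrow> bool" where
  "injective_hull_residue sc m \<longleftrightarrow> module sc \<and> injective_mod sc \<and>
     (\<exists>u. {r. sc r u = 0} = m \<and>
        (\<forall>N. submod sc N \<and> N \<noteq> {0} \<longrightarrow> N \<inter> range (\<lambda>r. sc r u) \<noteq> {0}))"

text \<open>S is presented as a ring with a surjective ring hom pi : R \<rightarrow> S with kernel I.\<close>
definition quotient_map :: "('a::comm_ring_1 \<Rightarrow> 's::comm_ring_1) \<Rightarrow> 'a set \<Rightarrow> bool" where
  "quotient_map \<pi> I \<longleftrightarrow> (\<forall>a b. \<pi> (a + b) = \<pi> a + \<pi> b) \<and> (\<forall>a b. \<pi> (a * b) = \<pi> a * \<pi> b)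
     \<and> \<pi> 1 = 1 \<and> surj \<pi> \<and> {r. \<pi> r = 0} = I"

definition annE :: "('a::comm_ring_1 \<Rightarrow> 'e::ab_group_add \<Rightarrow> 'e) \<Rightarrow> 'a set \<Rightarrow> 'e set" where
  "annE sc J = {e. \<forall>j\<in>J. sc j e = 0}"

definition ES :: "('a::comm_ring_1 \<Rightarrow> 'e::ab_group_add \<Rightarrow> 'e) \<Rightarrow> 'a set \<Rightarrow> 'e set" where
  "ES sc I = annE sc I"

definition annES :: "('a::comm_ring_1 \<Rightarrow> 'e::ab_group_add \<Rightarrow> 'e) \<Rightarrow> 'a set \<Rightarrow> 'a set \<Rightarrow> 'e set" where
  "annES sc I L = ES sc I \<inter> annE sc L"

definition sactS :: "('a::comm_ring_1 \<Rightarrow> 's::comm_ring_1) \<Rightarrow> ('a \<Rightarrow> 'e::ab_group_add \<Rightarrow> 'e) \<Rightarrow> 's \<Rightarrow> 'e \<Rightarrow> 'e" where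
  "sactS \<pi> sc s e = sc (SOME r. \<pi> r = s) e"

text \<open>An S[T;f]-module structure on E_S extending its S-module structure is given by
  an additive Frobenius-semilinear map T: E_S \<rightarrow> E_S (action of the variable T).\<close>
definition frob_structure :: "nat \<Rightarrow> ('a::comm_ring_1 \<Rightarrow> 'e::ab_group_add \<Rightarrow> 'e) \<Rightarrow> 'a set \<Rightarrow> ('e \<Rightarrow> 'e) \<Rightarrow> bool" where
  "frob_structure p sc I T \<longleftrightarrow> (\<forall>e\<in>ES sc I. T e \<in> ES sc I) \<and>
     (\<forall>x\<in>ES sc I. \<forall>y\<in>ES sc I. T (x + y) = T x + T y) \<and>
     (\<forall>r. \<forall>e\<in>ES sc I. T (sc r e) = sc (r ^ p) (T e))"

definition T_torsion_free :: "('a::comm_ring_1 \<Rightarrow> 'e::ab_group_add \<Rightarrow> 'e) \<Rightarrow> 'a set \<Rightarrow> ('e \<Rightarrow> 'e) \<Rightarrow> bool" where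
  "T_torsion_free sc I T \<longleftrightarrow> (\<forall>e\<in>ES sc I. T e = 0 \<longrightarrow> e = 0)"

definition skew_submod :: "('a::comm_ring_1 \<Rightarrow> 'e::ab_group_add \<Rightarrow> 'e) \<Rightarrow> 'a set \<Rightarrow> ('e \<Rightarrow> 'e) \<Rightarrow> 'e set \<Rightarrow> bool" where
  "skew_submod sc I T M \<longleftrightarrow> M \<subseteq> ES sc I \<and> submod sc M \<and> (\<forall>e\<in>M. T e \<in> M)"

definition ES_ideal :: "('a::comm_ring_1 \<Rightarrow> 'e::ab_group_add \<Rightarrow> 'e) \<Rightarrow> 'a set \<Rightarrow> ('e \<Rightarrow> 'e) \<Rightarrow> 'a set \<Rightarrow> bool" where
  "ES_ideal sc I T L \<longleftrightarrow> is_ideal L \<and> I \<subseteq> L \<and> skew_submod sc I T (annES sc I L)"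

text \<open>Elements of S[T;f]: finitely supported coefficient sequences (f i is the
  coefficient of T^i).  Multiplication uses T s = s^p T.\<close>
definition skew_elt :: "(nat \<Rightarrow> 's::comm_ring_1) \<Rightarrow> bool" where
  "skew_elt f \<longleftrightarrow> finite {i. f i \<noteq> 0}"

definition skew_mult :: "nat \<Rightarrow> (nat \<Rightarrow> 's::comm_ring_1) \<Rightarrow> (nat \<Rightarrow> 's) \<Rightarrow> nat \<Rightarrow> 's" where
  "skew_mult p f g n = (\<Sum>i\<le>n. f i * (g (n - i)) ^ (p ^ i))"

definition skew_act :: "('a::comm_ring_1 \<Rightarrow> 's::comm_ring_1) \<Rightarrow> ('a \<Rightarrow> 'e::ab_group_add \<Rightarrow> 'e) \<Rightarrow> ('e \<Rightarrow> 'e)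
     \<Rightarrow> (nat \<Rightarrow> 's) \<Rightarrow> 'e \<Rightarrow> 'e" where
  "skew_act \<pi> sc T f e = (\<Sum>i\<in>{i. f i \<noteq> 0}. sactS \<pi> sc (f i) ((T ^^ i) e))"

definition skew_ann :: "('a::comm_ring_1 \<Rightarrow> 's::comm_ring_1) \<Rightarrow> ('a \<Rightarrow> 'e::ab_group_add \<Rightarrow> 'e) \<Rightarrow> ('e \<Rightarrow> 'e)
     \<Rightarrow> 'e set \<Rightarrow> (nat \<Rightarrow> 's) set" where
  "skew_ann \<pi> sc T M = {f. skew_elt f \<and> (\<forall>e\<in>M. skew_act \<pi> sc T f e = 0)}"

definition skew_two_sided_ideal :: "nat \<Rightarrow> (nat \<Rightarrow> 's::comm_ring_1) set \<Rightarrow> bool" where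
  "skew_two_sided_ideal p A \<longleftrightarrow> (\<forall>f\<in>A. skew_elt f) \<and> (\<lambda>_. 0) \<in> A \<and>
     (\<forall>f\<in>A. \<forall>g\<in>A. (\<lambda>i. f i + g i) \<in> A) \<and>
     (\<forall>f\<in>A. \<forall>g. skew_elt g \<longrightarrow> skew_mult p g f \<in> A \<and> skew_mult p f g \<in> A)"

definition graded_two_sided_ideal :: "nat \<Rightarrow> (nat \<Rightarrow> 's::comm_ring_1) set \<Rightarrow> bool" where
  "graded_two_sided_ideal p A \<longleftrightarrow> skew_two_sided_ideal p A \<and>
     (\<exists>K. (\<forall>i. is_ideal (K i)) \<and> A = {f. skew_elt f \<and> (\<forall>i. f i \<in> K i)})"

definition grAnn :: "nat \<Rightarrow> ('a::comm_ring_1 \<Rightarrow> 's::comm_ring_1) \<Rightarrow> ('a \<Rightarrow> 'e::ab_group_add \<Rightarrow> 'e) \<Rightarrow> ('e \<Rightarrow> 'e)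
     \<Rightarrow> 'e set \<Rightarrow> (nat \<Rightarrow> 's) set" where
  "grAnn p \<pi> sc T M = (THE A. graded_two_sided_ideal p A \<and> A \<subseteq> skew_ann \<pi> sc T M \<and>
       (\<forall>B. graded_two_sided_ideal p B \<and> B \<subseteq> skew_ann \<pi> sc T M \<longrightarrow> B \<subseteq> A))"

text \<open>L' S[T;f] = \<Oplus>_i L' T^i.\<close>
definition ext_ideal :: "'s::comm_ring_1 set \<Rightarrow> (nat \<Rightarrow> 's) set" where
  "ext_ideal L' = {f. skew_elt f \<and> (\<forall>i. f i \<in> L')}"

definition ES_special :: "nat \<Rightarrow> ('a::comm_ring_1 \<Rightarrow> 's::comm_ring_1) \<Rightarrow> ('a \<Rightarrow> 'e::ab_group_add \<Rightarrow> 'e) \<Rightarrow> 'a set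
     \<Rightarrow> ('e \<Rightarrow> 'e) \<Rightarrow> 's set \<Rightarrow> bool" where
  "ES_special p \<pi> sc I T L' \<longleftrightarrow> is_ideal L' \<and>
     (\<exists>M. skew_submod sc I T M \<and> ext_ideal L' = grAnn p \<pi> sc T M)"

end

theory Submission
  imports Defs "HOL-Library.Set_Algebras" "HOL-Library.Function_Algebras"
begin

text \<open>
  For a \<open>T\<close>-stable submodule \<open>M \<subseteq> E\<^sub>S\<close>, the identity \<open>T\<^sup>i (r e) = r\<^bsup>p\<^sup>i\<^esup> T\<^sup>i e\<close> and
  torsion-freeness show that \<open>r\<close> kills \<open>T\<^sup>i M\<close> iff it kills \<open>M\<close>. Hence \<open>grAnn M\<close> is the
  extension of \<open>Ann\<^sub>R M\<close>, and \<open>L S\<close> is \<open>E\<^sub>S\<close>-special iff \<open>L = Ann\<^sub>R M\<close> for some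
  \<open>S[T;f]\<close>-submodule \<open>M\<close>. By Matlis duality, \<open>Ann\<^sub>R (Ann\<^sub>E L) = L\<close> and
  \<open>Ann\<^sub>E (Ann\<^sub>R M) = M\<close>, so this happens iff \<open>Ann\<^sub>E L\<close> is itself an \<open>S[T;f]\<close>-submodule,
  i.e. iff \<open>L\<close> is an \<open>E\<^sub>S\<close>-ideal.

  Matlis duality is proved from Baer's criterion and essentiality of \<open>R/m \<subseteq> E\<close>: for ideals
  directly; for cyclic and then finitely generated submodules by comparing lengths over the
  Artinian rings \<open>R / m\<^sup>n\<close>; and for arbitrary submodules by taking an \<open>m\<close>-adic limit of
  elements separating \<open>e \<notin> M\<close> from larger and larger finite subsets of \<open>M\<close>.
\<close>

section \<open>Ideals and submodules\<close>

lemma ideal_zero: "is_ideal J \<Longrightarrow> 0 \<in> J"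
  unfolding is_ideal_def by blast

lemma ideal_add: "is_ideal J \<Longrightarrow> x \<in> J \<Longrightarrow> y \<in> J \<Longrightarrow> x + y \<in> J"
  unfolding is_ideal_def by blast

lemma ideal_mult_left: "is_ideal J \<Longrightarrow> x \<in> J \<Longrightarrow> r * x \<in> J"
  unfolding is_ideal_def by blast

lemma ideal_mult_right: "is_ideal J \<Longrightarrow> x \<in> J \<Longrightarrow> x * r \<in> J"
  using ideal_mult_left[of J x r] by (simp add: mult.commute)

lemma ideal_uminus: "is_ideal J \<Longrightarrow> x \<in> J \<Longrightarrow> - x \<in> J"
  using ideal_mult_left[of J x "-1"] by simp

lemma ideal_diff: "is_ideal J \<Longrightarrow> x \<in> J \<Longrightarrow> y \<in> J \<Longrightarrow> x - y \<in> J"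
  using ideal_add[of J x "- y"] ideal_uminus[of J y] by simp

lemma ideal_sum: "is_ideal J \<Longrightarrow> (\<And>i. i \<in> S \<Longrightarrow> f i \<in> J) \<Longrightarrow> sum f S \<in> J"
  by (induction S rule: infinite_finite_induct) (auto intro: ideal_zero ideal_add)

lemma ideal_eq_UNIV_if_one: "is_ideal J \<Longrightarrow> 1 \<in> J \<Longrightarrow> J = UNIV"
  using ideal_mult_left[of J 1] by auto

lemma is_ideal_UNIV: "is_ideal UNIV"
  unfolding is_ideal_def by simp

lemma is_ideal_Inter: "(\<And>J. J \<in> S \<Longrightarrow> is_ideal J) \<Longrightarrow> is_ideal (\<Inter>S)"
  unfolding is_ideal_def by blast

lemma is_ideal_set_plus:
  assumes "is_ideal A" "is_ideal B"
  shows "is_ideal (A + B)"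
  unfolding is_ideal_def set_plus_def
proof (intro conjI ballI allI impI)
  show "0 \<in> {c. \<exists>a\<in>A. \<exists>b\<in>B. c = a + b}"
    using assms by (auto intro!: bexI[of _ 0] ideal_zero)
next
  fix x y assume "x \<in> {c. \<exists>a\<in>A. \<exists>b\<in>B. c = a + b}" "y \<in> {c. \<exists>a\<in>A. \<exists>b\<in>B. c = a + b}"
  then obtain a b a' b' where "x = a + b" "y = a' + b'" "a \<in> A" "b \<in> B" "a' \<in> A" "b' \<in> B"
    by blast
  moreover have "a + a' \<in> A" "b + b' \<in> B"
    using calculation assms ideal_add by blast+
  moreover have "x + y = (a + a') + (b + b')"
    using calculation by (simp add: algebra_simps)
  ultimately show "x + y \<in> {c. \<exists>a\<in>A. \<exists>b\<in>B. c = a + b}"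
    by blast
next
  fix r x assume "x \<in> {c. \<exists>a\<in>A. \<exists>b\<in>B. c = a + b}"
  then obtain a b where "x = a + b" "a \<in> A" "b \<in> B"
    by blast
  moreover have "r * a \<in> A" "r * b \<in> B"
    using calculation assms ideal_mult_left by blast+
  ultimately show "r * x \<in> {c. \<exists>a\<in>A. \<exists>b\<in>B. c = a + b}"
    by (auto simp: distrib_left)
qed

lemma is_ideal_elt_set_times:
  assumes "is_ideal J"
  shows "is_ideal (b *o J)"
  unfolding is_ideal_def elt_set_times_def
proof (intro conjI ballI allI impI)
  show "0 \<in> {c. \<exists>t\<in>J. c = b * t}"
    using ideal_zero[OF assms] by force
next
  fix x y assume "x \<in> {c. \<exists>t\<in>J. c = b * t}" "y \<in> {c. \<exists>t\<in>J. c = b * t}"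
  then obtain t t' where "x = b * t" "y = b * t'" "t \<in> J" "t' \<in> J"
    by blast
  moreover have "t + t' \<in> J"
    using calculation ideal_add[OF assms] by blast
  ultimately show "x + y \<in> {c. \<exists>t\<in>J. c = b * t}"
    by (auto intro!: bexI[of _ "t + t'"] simp: distrib_left)
next
  fix r x assume "x \<in> {c. \<exists>t\<in>J. c = b * t}"
  then obtain t where "x = b * t" "t \<in> J"
    by blast
  then show "r * x \<in> {c. \<exists>t\<in>J. c = b * t}"
    using ideal_mult_left[OF assms] by (auto simp: mult.left_commute)
qed

lemma is_ideal_iff_submod: "is_ideal J \<longleftrightarrow> submod (*) J"
  unfolding is_ideal_def submod_def by blast

lemma module_mult: "module ((*) :: 'a::comm_ring_1 \<Rightarrow> 'a \<Rightarrow> 'a)"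
  by standard (simp_all add: algebra_simps)

lemma submod_zero: "submod sc N \<Longrightarrow> 0 \<in> N"
  unfolding submod_def by blast

lemma submod_add: "submod sc N \<Longrightarrow> x \<in> N \<Longrightarrow> y \<in> N \<Longrightarrow> x + y \<in> N"
  unfolding submod_def by blast

lemma submod_scale: "submod sc N \<Longrightarrow> x \<in> N \<Longrightarrow> sc r x \<in> N"
  unfolding submod_def by blast

lemma submod_diff:
  assumes "module sc" "submod sc N" "x \<in> N" "y \<in> N"
  shows "x - y \<in> N"
proof -
  have "sc (-1) y = - y"
    using module.scale_minus_left[OF assms(1), of 1 y] module.scale_one[OF assms(1)] by simp
  then show ?thesis
    using submod_add[OF assms(2,3) submod_scale[OF assms(2,4), of "-1"]] by simp
qed

lemma submod_sum: "submod sc N \<Longrightarrow> (\<And>z. z \<in> S \<Longrightarrow> f z \<in> N) \<Longrightarrow> sum f S \<in> N"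
  by (induction S rule: infinite_finite_induct) (auto intro: submod_zero submod_add)

lemma submod_Int: "submod sc A \<Longrightarrow> submod sc B \<Longrightarrow> submod sc (A \<inter> B)"
  unfolding submod_def by blast

lemma submod_set_plus:
  assumes "module sc" "submod sc A" "submod sc B"
  shows "submod sc (A + B)"
  unfolding submod_def set_plus_def
proof (intro conjI ballI allI)
  show "0 \<in> {c. \<exists>a\<in>A. \<exists>b\<in>B. c = a + b}"
    using assms(2,3) by (auto intro!: bexI[of _ 0] submod_zero)
next
  fix x y assume "x \<in> {c. \<exists>a\<in>A. \<exists>b\<in>B. c = a + b}" "y \<in> {c. \<exists>a\<in>A. \<exists>b\<in>B. c = a + b}"
  then obtain a b a' b' where "x = a + b" "y = a' + b'" "a \<in> A" "b \<in> B" "a' \<in> A" "b' \<in> B"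
    by blast
  moreover have "a + a' \<in> A" "b + b' \<in> B"
    using calculation assms(2,3) submod_add by blast+
  moreover have "x + y = (a + a') + (b + b')"
    using calculation by (simp add: algebra_simps)
  ultimately show "x + y \<in> {c. \<exists>a\<in>A. \<exists>b\<in>B. c = a + b}"
    by blast
next
  fix r x assume "x \<in> {c. \<exists>a\<in>A. \<exists>b\<in>B. c = a + b}"
  then obtain a b where "x = a + b" "a \<in> A" "b \<in> B"
    by blast
  moreover have "sc r a \<in> A" "sc r b \<in> B"
    using calculation assms(2,3) submod_scale by blast+
  ultimately show "sc r x \<in> {c. \<exists>a\<in>A. \<exists>b\<in>B. c = a + b}"
    using module.scale_right_distrib[OF assms(1)] by auto
qed

lemma submod_zero_set: "module sc \<Longrightarrow> submod sc {0}"
  unfolding submod_def by (simp add: module.scale_zero_right)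

lemma submod_cyclic:
  assumes "module sc"
  shows "submod sc (range (\<lambda>r. sc r z))"
proof -
  interpret M: module sc by (rule assms)
  show ?thesis
    unfolding submod_def
  proof (intro conjI ballI allI)
    show "0 \<in> range (\<lambda>r. sc r z)"
      using M.scale_zero_left by (metis rangeI)
  next
    fix x y assume "x \<in> range (\<lambda>r. sc r z)" "y \<in> range (\<lambda>r. sc r z)"
    then obtain a b where "x = sc a z" "y = sc b z"
      by blast
    then have "x + y = sc (a + b) z"
      by (simp add: M.scale_left_distrib)
    then show "x + y \<in> range (\<lambda>r. sc r z)"
      by blast
  next
    fix r x assume "x \<in> range (\<lambda>r. sc r z)"
    then obtain a where "x = sc a z"
      by blast
    then have "sc r x = sc (r * a) z"
      by simp
    then show "sc r x \<in> range (\<lambda>r. sc r z)"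
      by blast
  qed
qed

lemma submod_image:
  assumes V: "submod scA V"
    and add: "\<And>x y. x \<in> V \<Longrightarrow> y \<in> V \<Longrightarrow> f (x + y) = f x + f y"
    and scale: "\<And>r x. x \<in> V \<Longrightarrow> f (scA r x) = scB r (f x)"
  shows "submod scB (f ` V)"
  unfolding submod_def
proof (intro conjI ballI allI)
  have "f 0 = 0"
    using add[OF submod_zero[OF V] submod_zero[OF V]] by simp
  then show "0 \<in> f ` V"
    using submod_zero[OF V] by force
next
  fix a b assume "a \<in> f ` V" "b \<in> f ` V"
  then obtain x y where "x \<in> V" "y \<in> V" "a = f x" "b = f y"
    by blast
  then show "a + b \<in> f ` V"
    using add[of x y] submod_add[OF V, of x y] by (metis image_eqI)
next
  fix r a assume "a \<in> f ` V"
  then obtain x where "x \<in> V" "a = f x"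
    by blast
  then show "scB r a \<in> f ` V"
    using scale[of x r] submod_scale[OF V, of x r] by (metis image_eqI)
qed

lemma submod_iff_subspace: "module sc \<Longrightarrow> submod sc N \<longleftrightarrow> module.subspace sc N"
  unfolding submod_def by (simp add: module.subspace_def)

lemma submod_annE:
  assumes "module sc"
  shows "submod sc (annE sc J)"
proof -
  interpret M: module sc by (rule assms)
  show ?thesis
    unfolding submod_def annE_def
    by (auto simp: M.scale_right_distrib simp del: M.scale_scale)
      (metis M.scale_left_commute M.scale_zero_right)
qed

definition ann :: "('a::comm_ring_1 \<Rightarrow> 'e::ab_group_add \<Rightarrow> 'e) \<Rightarrow> 'e set \<Rightarrow> 'a set" where
  "ann sc S = {r. \<forall>z\<in>S. sc r z = 0}"

lemma is_ideal_ann: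
  assumes "module sc"
  shows "is_ideal (ann sc S)"
proof -
  interpret M: module sc by (rule assms)
  show ?thesis
    unfolding is_ideal_def ann_def by (simp add: M.scale_left_distrib flip: M.scale_scale)
qed

lemma ann_antimono: "S \<subseteq> S' \<Longrightarrow> ann sc S' \<subseteq> ann sc S"
  unfolding ann_def by blast

lemma annE_ann_superset: "S \<subseteq> annE sc (ann sc S)"
  unfolding annE_def ann_def by blast

lemma is_ideal_ideal_gen: "is_ideal (ideal_gen F)"
  unfolding ideal_gen_def by (rule is_ideal_Inter) blast

lemma ideal_gen_superset: "F \<subseteq> ideal_gen F"
  unfolding ideal_gen_def by blast

lemma ideal_gen_least: "is_ideal J \<Longrightarrow> F \<subseteq> J \<Longrightarrow> ideal_gen F \<subseteq> J"
  unfolding ideal_gen_def by blast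

lemma ideal_gen_mono: "F \<subseteq> G \<Longrightarrow> ideal_gen F \<subseteq> ideal_gen G"
  using ideal_gen_least[OF is_ideal_ideal_gen, of F G] ideal_gen_superset[of G] by blast

lemma ideal_gen_idem: "is_ideal J \<Longrightarrow> ideal_gen J = J"
  using ideal_gen_least[of J J] ideal_gen_superset[of J] by blast

lemma is_ideal_mult_preimage:
  assumes "is_ideal Z"
  shows "is_ideal {a. a * y \<in> Z}"
  unfolding is_ideal_def
proof (intro conjI ballI allI impI)
  show "0 \<in> {a. a * y \<in> Z}"
    using ideal_zero[OF assms] by simp
next
  fix a b assume "a \<in> {a. a * y \<in> Z}" "b \<in> {a. a * y \<in> Z}"
  then show "a + b \<in> {a. a * y \<in> Z}"
    using ideal_add[OF assms] by (simp add: distrib_right)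
next
  fix r a assume "a \<in> {a. a * y \<in> Z}"
  then show "r * a \<in> {a. a * y \<in> Z}"
    using ideal_mult_left[OF assms, of "a * y" r] by (simp add: mult.assoc)
qed

lemma ideal_gen_mult:
  assumes a: "a \<in> ideal_gen X" and b: "b \<in> ideal_gen Y"
  shows "a * b \<in> ideal_gen {x * y | x y. x \<in> X \<and> y \<in> Y}"
proof -
  let ?Z = "ideal_gen {x * y | x y. x \<in> X \<and> y \<in> Y}"
  have Z: "is_ideal ?Z"
    by (rule is_ideal_ideal_gen)
  have left: "a' * y \<in> ?Z" if "a' \<in> ideal_gen X" "y \<in> Y" for a' y
  proof -
    have "X \<subseteq> {a. a * y \<in> ?Z}"
    proof
      fix x assume "x \<in> X"
      then have "x * y \<in> {x * y | x y. x \<in> X \<and> y \<in> Y}"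
        using that(2) by blast
      then show "x \<in> {a. a * y \<in> ?Z}"
        using ideal_gen_superset[of "{x * y | x y. x \<in> X \<and> y \<in> Y}"] by blast
    qed
    then have "ideal_gen X \<subseteq> {a. a * y \<in> ?Z}"
      by (rule ideal_gen_least[OF is_ideal_mult_preimage[OF Z]])
    then show ?thesis
      using that(1) by blast
  qed
  have "Y \<subseteq> {b. b * a \<in> ?Z}"
  proof
    fix y assume "y \<in> Y"
    then have "a * y \<in> ?Z"
      using left[OF a] by blast
    then show "y \<in> {b. b * a \<in> ?Z}"
      by (simp add: mult.commute)
  qed
  then have "ideal_gen Y \<subseteq> {b. b * a \<in> ?Z}"
    by (rule ideal_gen_least[OF is_ideal_mult_preimage[OF Z]])
  then have "b * a \<in> ?Z"
    using b by blast
  then show ?thesis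
    by (simp add: mult.commute)
qed

lemma ideal_gen_insert: "ideal_gen (insert g X) = ideal_gen X + g *o UNIV"
proof
  have J: "is_ideal (ideal_gen X + g *o UNIV)"
    by (intro is_ideal_set_plus is_ideal_elt_set_times is_ideal_ideal_gen is_ideal_UNIV)
  have "g \<in> ideal_gen X + g *o UNIV"
    using set_plus_intro[OF ideal_zero[OF is_ideal_ideal_gen] set_times_intro2[OF UNIV_I, of g 1]]
    by simp
  moreover have "x \<in> ideal_gen X + g *o UNIV" if "x \<in> X" for x
    using set_plus_intro[OF subsetD[OF ideal_gen_superset that] set_times_intro2[OF UNIV_I, of g 0]]
    by simp
  ultimately have "insert g X \<subseteq> ideal_gen X + g *o UNIV"
    by (intro insert_subsetI subsetI)
  then show "ideal_gen (insert g X) \<subseteq> ideal_gen X + g *o UNIV"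
    by (rule ideal_gen_least[OF J])
next
  show "ideal_gen X + g *o UNIV \<subseteq> ideal_gen (insert g X)"
  proof
    fix x assume "x \<in> ideal_gen X + g *o UNIV"
    then obtain c t where x: "x = c + g * t" and c: "c \<in> ideal_gen X"
      by (auto elim!: set_plus_elim simp: elt_set_times_def)
    have "c \<in> ideal_gen (insert g X)"
      using c ideal_gen_mono[of X "insert g X"] by blast
    moreover have "g \<in> ideal_gen (insert g X)"
      using ideal_gen_superset[of "insert g X"] by blast
    ultimately show "x \<in> ideal_gen (insert g X)"
      unfolding x by (intro ideal_add[OF is_ideal_ideal_gen] ideal_mult_right[OF is_ideal_ideal_gen])
  qed
qed

lemma monomial_in_ideal_pow:
  "length xs = n \<Longrightarrow> set xs \<subseteq> J \<Longrightarrow> prod_list xs \<in> ideal_pow J n"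
  unfolding ideal_pow_def
  using ideal_gen_superset[of "{prod_list xs | xs. length xs = n \<and> set xs \<subseteq> J}"] by blast

lemma is_ideal_ideal_pow: "is_ideal (ideal_pow J n)"
  unfolding ideal_pow_def by (rule is_ideal_ideal_gen)

lemma ideal_pow_0: "ideal_pow J 0 = UNIV"
  using monomial_in_ideal_pow[of "[]" 0 J] ideal_eq_UNIV_if_one[OF is_ideal_ideal_pow] by simp

lemma ideal_pow_Suc_mult:
  assumes a: "a \<in> J" and b: "b \<in> ideal_pow J n"
  shows "a * b \<in> ideal_pow J (Suc n)"
proof -
  let ?P = "\<lambda>n. {prod_list xs | xs. length xs = n \<and> set xs \<subseteq> J}"
  have "a * b \<in> ideal_gen {x * y | x y. x \<in> J \<and> y \<in> ?P n}"
    using ideal_gen_mult[of a J b "?P n"] a b ideal_gen_superset[of J] unfolding ideal_pow_def by blast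
  moreover have "{x * y | x y. x \<in> J \<and> y \<in> ?P n} \<subseteq> ?P (Suc n)"
  proof
    fix z assume "z \<in> {x * y | x y. x \<in> J \<and> y \<in> ?P n}"
    then obtain x xs where "z = prod_list (x # xs)" "length (x # xs) = Suc n" "set (x # xs) \<subseteq> J"
      by auto
    then show "z \<in> ?P (Suc n)"
      by blast
  qed
  ultimately show ?thesis
    unfolding ideal_pow_def using ideal_gen_mono by blast
qed

lemma ideal_pow_Suc_subset:
  assumes J: "is_ideal J"
  shows "ideal_pow J (Suc n) \<subseteq> ideal_pow J n"
  unfolding ideal_pow_def[of J "Suc n"]
proof (rule ideal_gen_least[OF is_ideal_ideal_pow], safe)
  fix xs :: "'a list" assume xs: "length xs = Suc n" "set xs \<subseteq> J"
  then obtain x ys where "xs = x # ys"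
    by (cases xs) auto
  then show "prod_list xs \<in> ideal_pow J n"
    using xs monomial_in_ideal_pow[of ys n J] ideal_mult_left[OF is_ideal_ideal_pow] by auto
qed

lemma ideal_pow_antimono:
  assumes "is_ideal J" "n \<le> n'"
  shows "ideal_pow J n' \<subseteq> ideal_pow J n"
  using assms(2)
proof (induction n' rule: dec_induct)
  case (step k)
  then show ?case
    using ideal_pow_Suc_subset[OF assms(1), of k] by blast
qed simp

lemma prod_list_split_power:
  fixes ys :: "'a::comm_monoid_mult list"
  shows "prod_list ys = g ^ count_list ys g * prod_list (filter (\<lambda>x. x \<noteq> g) ys)"
  by (induction ys) (simp_all add: algebra_simps)

lemma prod_list_in_ideal_gen_monomials:
  "set xs \<subseteq> ideal_gen G \<Longrightarrow>
    prod_list xs \<in> ideal_gen {prod_list ys | ys. length ys = length xs \<and> set ys \<subseteq> G}"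
proof (induction xs)
  case Nil
  have "prod_list [] \<in> {prod_list ys | ys. length ys = length ([] :: 'a list) \<and> set ys \<subseteq> G}"
    by (intro CollectI exI[of _ "[]"]) simp
  then show ?case
    using ideal_gen_superset[of "{prod_list ys | ys. length ys = length ([] :: 'a list) \<and> set ys \<subseteq> G}"]
    by blast
next
  case (Cons x xs)
  let ?M = "\<lambda>k. {prod_list ys | ys. length ys = k \<and> set ys \<subseteq> G}"
  have "x \<in> ideal_gen G" "prod_list xs \<in> ideal_gen (?M (length xs))"
    using Cons by auto
  then have "x * prod_list xs \<in> ideal_gen {a * b | a b. a \<in> G \<and> b \<in> ?M (length xs)}"
    by (rule ideal_gen_mult)
  moreover have "{a * b | a b. a \<in> G \<and> b \<in> ?M (length xs)} \<subseteq> ?M (length (x # xs))"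
  proof
    fix z assume "z \<in> {a * b | a b. a \<in> G \<and> b \<in> ?M (length xs)}"
    then obtain a ys where "z = a * prod_list ys" "a \<in> G" "length ys = length xs" "set ys \<subseteq> G"
      by blast
    then have "z = prod_list (a # ys) \<and> length (a # ys) = length (x # xs) \<and> set (a # ys) \<subseteq> G"
      by simp
    then show "z \<in> ?M (length (x # xs))"
      by blast
  qed
  ultimately show ?case
    by (simp add: subsetD[OF ideal_gen_mono])
qed

text \<open>By pigeonhole, a monomial of length \<open>card G * N + 1\<close> in the generators contains some
  generator at least \<open>N + 1\<close> times.\<close>

lemma ideal_pow_subset_if_generators_pow:
  assumes G: "finite G" "J = ideal_gen G" and Z: "is_ideal Z" and pow: "\<And>g. g \<in> G \<Longrightarrow> g ^ N \<in> Z"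
  shows "ideal_pow J (card G * N + 1) \<subseteq> Z"
proof -
  let ?K = "card G * N + 1"
  have "prod_list ys \<in> Z" if ys: "length ys = ?K" "set ys \<subseteq> G" for ys
  proof -
    have "\<exists>g\<in>G. N < count_list ys g"
    proof (rule ccontr)
      assume "\<not> ?thesis"
      then have "sum (count_list ys) G \<le> card G * N"
        using sum_bounded_above[of G "count_list ys" N] by (simp add: not_less)
      then show False
        using sum_count_set[OF ys(2) G(1)] ys(1) by simp
    qed
    then obtain g where g: "g \<in> G" "N < count_list ys g"
      by blast
    then have "g ^ count_list ys g = g ^ N * g ^ (count_list ys g - N)"
      by (simp flip: power_add)
    then have "prod_list ys = g ^ N * (g ^ (count_list ys g - N) * prod_list (filter (\<lambda>x. x \<noteq> g) ys))"
      using prod_list_split_power[of ys g] by (simp add: mult.assoc)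
    then show ?thesis
      using ideal_mult_right[OF Z pow[OF g(1)]] by simp
  qed
  then have "{prod_list ys | ys. length ys = ?K \<and> set ys \<subseteq> G} \<subseteq> Z"
    by auto
  then have gen: "ideal_gen {prod_list ys | ys. length ys = ?K \<and> set ys \<subseteq> G} \<subseteq> Z"
    by (rule ideal_gen_least[OF Z])
  have "{prod_list xs | xs. length xs = ?K \<and> set xs \<subseteq> J} \<subseteq> Z"
  proof safe
    fix xs :: "'a list" assume "length xs = ?K" "set xs \<subseteq> J"
    then show "prod_list xs \<in> Z"
      using prod_list_in_ideal_gen_monomials[of xs G] G(2) gen by auto
  qed
  then show ?thesis
    unfolding ideal_pow_def by (rule ideal_gen_least[OF Z])
qed

section \<open>Local and Noetherian rings\<close>

lemma exists_maximal_ideal: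
  fixes J :: "'a::comm_ring_1 set"
  assumes J: "is_ideal J" "1 \<notin> J"
  shows "\<exists>M. is_maximal_ideal M \<and> J \<subseteq> M"
proof -
  let ?A = "{K. is_ideal K \<and> J \<subseteq> K \<and> 1 \<notin> K}"
  have "\<exists>U\<in>?A. \<forall>X\<in>C. X \<subseteq> U" if C: "C \<in> chains ?A" for C
  proof (cases "C = {}")
    case True
    then show ?thesis
      using J by blast
  next
    case False
    have CA: "C \<subseteq> ?A" and ch: "\<forall>X\<in>C. \<forall>Y\<in>C. X \<subseteq> Y \<or> Y \<subseteq> X"
      using C unfolding chains_def chain_subset_def by auto
    have "is_ideal (\<Union>C)"
      unfolding is_ideal_def
    proof (intro conjI ballI allI impI)
      show "0 \<in> \<Union>C"
        using False CA ideal_zero by blast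
    next
      fix x y assume "x \<in> \<Union>C" "y \<in> \<Union>C"
      then obtain X Y where "X \<in> C" "Y \<in> C" "x \<in> X" "y \<in> Y"
        by blast
      then show "x + y \<in> \<Union>C"
        using ch CA ideal_add by (metis (no_types, lifting) UnionI mem_Collect_eq subset_eq)
    next
      fix r x assume "x \<in> \<Union>C"
      then obtain X where "X \<in> C" "x \<in> X"
        by blast
      then show "r * x \<in> \<Union>C"
        using CA ideal_mult_left by blast
    qed
    then show ?thesis
      using False CA by blast
  qed
  then obtain M where M: "M \<in> ?A" "\<forall>X\<in>?A. M \<subseteq> X \<longrightarrow> X = M"
    using Zorn_Lemma2[of ?A] by blast
  have "is_maximal_ideal M"
    unfolding is_maximal_ideal_def
  proof (intro conjI allI impI)
    show "is_ideal M" "M \<noteq> UNIV"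
      using M by blast+
    fix K assume K: "is_ideal K \<and> M \<subseteq> K"
    show "K = M \<or> K = UNIV"
      using ideal_eq_UNIV_if_one K M by (cases "1 \<in> K") blast+
  qed
  then show ?thesis
    using M by blast
qed

context
  fixes m :: "'a::comm_ring_1 set"
  assumes local: "local_ring_with m"
begin

lemma local_ring_is_ideal: "is_ideal m"
  using local unfolding local_ring_with_def is_maximal_ideal_def by blast

lemma local_ring_one_notin: "1 \<notin> m"
  using ideal_eq_UNIV_if_one local_ring_is_ideal local
  unfolding local_ring_with_def is_maximal_ideal_def by blast

lemma local_ring_unit:
  assumes "s \<notin> m"
  shows "\<exists>t. t * s = 1"
proof (rule ccontr)
  assume no_inverse: "\<not> (\<exists>t. t * s = 1)"
  have "is_ideal (s *o UNIV)"
    by (rule is_ideal_elt_set_times[OF is_ideal_UNIV])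
  moreover have "1 \<notin> s *o UNIV"
    using no_inverse by (auto simp: elt_set_times_def mult.commute)
  ultimately obtain M where "is_maximal_ideal M" "s *o UNIV \<subseteq> M"
    using exists_maximal_ideal by blast
  moreover have "s \<in> s *o UNIV"
    using set_times_intro2[OF UNIV_I, of s 1] by simp
  ultimately show False
    using local assms unfolding local_ring_with_def by blast
qed

lemma local_ring_proper_ideal_subset:
  assumes J: "is_ideal J" "1 \<notin> J"
  shows "J \<subseteq> m"
proof
  fix x assume x: "x \<in> J"
  show "x \<in> m"
  proof (rule ccontr)
    assume "x \<notin> m"
    then obtain t where "t * x = 1"
      using local_ring_unit by blast
    then show False
      using ideal_mult_left[OF J(1) x, of t] J(2) by simp
  qed
qed

text \<open>That is, a simple quotient \<open>C / A\<close> is isomorphic to \<open>R / m\<close>.\<close>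

lemma local_ring_simple_step:
  assumes A: "is_ideal A" and C: "is_ideal C" and AC: "A \<subset> C"
    and simple: "\<And>Y. is_ideal Y \<Longrightarrow> A \<subseteq> Y \<Longrightarrow> Y \<subseteq> C \<Longrightarrow> Y = A \<or> Y = C"
  obtains b where "b \<in> C" "b \<notin> A" "C = A + b *o UNIV" "b *o m \<subseteq> A"
proof -
  obtain b where b: "b \<in> C" "b \<notin> A"
    using AC by blast
  have sum_between: "A \<subseteq> A + b *o J" "A + b *o J \<subseteq> C" if J: "is_ideal J" for J
  proof -
    show "A \<subseteq> A + b *o J"
    proof
      fix x assume "x \<in> A"
      from set_plus_intro[OF this set_times_intro2[OF ideal_zero[OF J]]]
      show "x \<in> A + b *o J"
        by simp
    qed
    show "A + b *o J \<subseteq> C"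
    proof
      fix x assume "x \<in> A + b *o J"
      then obtain a c where "x = a + c" "a \<in> A" "c \<in> b *o J"
        by (rule set_plus_elim)
      moreover from this(3) obtain t where "c = b * t"
        by (auto simp: elt_set_times_def)
      ultimately show "x \<in> C"
        using b(1) AC ideal_add[OF C] ideal_mult_right[OF C] by blast
    qed
  qed
  have "b \<in> A + b *o UNIV"
    using set_plus_intro[OF ideal_zero[OF A] set_times_intro2[OF UNIV_I, of b 1]] by simp
  then have gen: "C = A + b *o UNIV"
    using simple[OF is_ideal_set_plus[OF A is_ideal_elt_set_times[OF is_ideal_UNIV]]]
      sum_between[OF is_ideal_UNIV] b(2) by blast
  have "A + b *o m \<noteq> C"
  proof
    assume "A + b *o m = C"
    then have "b \<in> A + b *o m"
      using b(1) by simp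
    then obtain a c where "b = a + c" "a \<in> A" "c \<in> b *o m"
      by (rule set_plus_elim)
    moreover from this(3) obtain t where "c = b * t" "t \<in> m"
      by (auto simp: elt_set_times_def)
    ultimately have "a = b - b * t"
      by (metis add_diff_cancel_right')
    also have "\<dots> = (1 - t) * b"
      by (simp add: algebra_simps)
    finally have a: "a = (1 - t) * b" .
    have "1 - t \<notin> m"
    proof
      assume "1 - t \<in> m"
      then have "(1 - t) + t \<in> m"
        using ideal_add[OF local_ring_is_ideal] \<open>t \<in> m\<close> by blast
      then show False
        using local_ring_one_notin by simp
    qed
    then obtain s where "s * (1 - t) = 1"
      using local_ring_unit by blast
    then have "b = s * a"
      unfolding a by (simp add: mult.assoc[symmetric])
    then show False
      using b(2) ideal_mult_left[OF A \<open>a \<in> A\<close>] by simp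
  qed
  then have "A + b *o m = A"
    using simple[OF is_ideal_set_plus[OF A is_ideal_elt_set_times[OF local_ring_is_ideal]]]
      sum_between[OF local_ring_is_ideal] by blast
  moreover have "b *o m \<subseteq> A + b *o m"
  proof
    fix x assume "x \<in> b *o m"
    from set_plus_intro[OF ideal_zero[OF A] this] show "x \<in> A + b *o m"
      by simp
  qed
  ultimately show ?thesis
    using that b gen by blast
qed

end

lemma noetherian_ascending_chain:
  fixes I :: "nat \<Rightarrow> 'a::comm_ring_1 set"
  assumes noeth: "noetherian_ring TYPE('a)"
    and I: "\<And>n. is_ideal (I n)" and mono: "\<And>n. I n \<subseteq> I (Suc n)"
  shows "\<exists>N. \<forall>n\<ge>N. I n = I N"
proof -
  have mono': "I i \<subseteq> I j" if "i \<le> j" for i j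
    using lift_Suc_mono_le[of I, OF mono that] .
  have U: "is_ideal (\<Union>n. I n)"
    unfolding is_ideal_def
  proof (intro conjI ballI allI impI)
    show "0 \<in> (\<Union>n. I n)"
      using ideal_zero[OF I] by blast
  next
    fix x y assume "x \<in> (\<Union>n. I n)" "y \<in> (\<Union>n. I n)"
    then obtain i j where "x \<in> I i" "y \<in> I j"
      by blast
    then have "x \<in> I (max i j)" "y \<in> I (max i j)"
      using mono'[of i "max i j"] mono'[of j "max i j"] by auto
    then show "x + y \<in> (\<Union>n. I n)"
      using ideal_add[OF I] by blast
  next
    fix r x assume "x \<in> (\<Union>n. I n)"
    then show "r * x \<in> (\<Union>n. I n)"
      using ideal_mult_left[OF I] by blast
  qed
  obtain F where F: "finite F" "(\<Union>n. I n) = ideal_gen F"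
    using noeth U unfolding noetherian_ring_def by (elim allE[of _ "\<Union>n. I n"]) blast
  have "\<forall>f\<in>F. \<exists>n. f \<in> I n"
  proof
    fix f assume "f \<in> F"
    then have "f \<in> (\<Union>n. I n)"
      using F(2) ideal_gen_superset[of F] by (simp add: subset_iff)
    then show "\<exists>n. f \<in> I n"
      by simp
  qed
  then obtain nf where nf: "\<forall>f\<in>F. f \<in> I (nf f)"
    by metis
  define N where "N = Max (nf ` F)"
  have "F \<subseteq> I N"
  proof
    fix f assume "f \<in> F"
    then have "nf f \<le> N"
      unfolding N_def using F(1) by simp
    then show "f \<in> I N"
      using nf \<open>f \<in> F\<close> mono' by blast
  qed
  then have "ideal_gen F \<subseteq> I N"
    by (rule ideal_gen_least[OF I])
  then have "(\<Union>n. I n) \<subseteq> I N"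
    using F(2) by simp
  then show ?thesis
    using mono' by blast
qed

lemma madic_limit:
  assumes m: "is_ideal m" and complete: "madic_complete m"
    and start: "\<Gamma> 0 \<noteq> {}" and step: "\<And>n w. w \<in> \<Gamma> n \<Longrightarrow> \<exists>r\<in>\<Gamma> (Suc n). r - w \<in> ideal_pow m n"
  obtains x y where "\<And>n. x n \<in> \<Gamma> n" "\<And>k. \<exists>N. \<forall>n\<ge>N. x n - y \<in> ideal_pow m k"
proof -
  have step': "\<exists>r. r \<in> \<Gamma> (Suc n) \<and> r - w \<in> ideal_pow m n" if "w \<in> \<Gamma> n" for n w
    using step[OF that] by blast
  define x where "x = rec_nat (SOME r. r \<in> \<Gamma> 0) (\<lambda>n w. SOME r. r \<in> \<Gamma> (Suc n) \<and> r - w \<in> ideal_pow m n)"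
  have x_in: "x n \<in> \<Gamma> n" for n
  proof (induction n)
    case 0
    then show ?case
      unfolding x_def using start by (simp add: some_in_eq)
  next
    case (Suc n)
    then show ?case
      unfolding x_def using someI_ex[OF step'[OF Suc[unfolded x_def]]] by simp
  qed
  have x_step: "x (Suc n) - x n \<in> ideal_pow m n" for n
    using someI_ex[OF step'[OF x_in[of n, unfolded x_def]]] unfolding x_def by simp
  have cauchy: "x n' - x n \<in> ideal_pow m n" if "n \<le> n'" for n n'
    using that
  proof (induction n' rule: dec_induct)
    case base
    then show ?case
      using ideal_zero[OF is_ideal_ideal_pow] by simp
  next
    case (step k)
    have "x (Suc k) - x k \<in> ideal_pow m n"
      using x_step[of k] ideal_pow_antimono[OF m step(1)] by blast
    from ideal_add[OF is_ideal_ideal_pow this step(3)] show ?case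
      by simp
  qed
  have close: "x n - x n' \<in> ideal_pow m k" if "k \<le> n" "k \<le> n'" for k n n'
  proof (cases "n \<le> n'")
    case True
    then have "x n' - x n \<in> ideal_pow m k"
      using cauchy ideal_pow_antimono[OF m that(1)] by blast
    from ideal_uminus[OF is_ideal_ideal_pow this] show ?thesis
      by simp
  next
    case False
    then show ?thesis
      using cauchy[of n' n] ideal_pow_antimono[OF m that(2)] by auto
  qed
  have "\<forall>k. \<exists>N. \<forall>n\<ge>N. \<forall>n'\<ge>N. x n - x n' \<in> ideal_pow m k"
  proof
    fix k
    show "\<exists>N. \<forall>n\<ge>N. \<forall>n'\<ge>N. x n - x n' \<in> ideal_pow m k"
      using close by (intro exI[of _ k] allI impI)
  qed
  then obtain y where "\<And>k. \<exists>N. \<forall>n\<ge>N. x n - y \<in> ideal_pow m k"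
    using complete[unfolded madic_complete_def, THEN conjunct2, rule_format] by blast
  then show ?thesis
    using that x_in by blast
qed

section \<open>Lengths of modules\<close>

definition strict_chain ::
    "('r::comm_ring_1 \<Rightarrow> 'v::ab_group_add \<Rightarrow> 'v) \<Rightarrow> 'v set \<Rightarrow> 'v set \<Rightarrow> nat \<Rightarrow> (nat \<Rightarrow> 'v set) \<Rightarrow> bool"
  where "strict_chain sc A B n c \<longleftrightarrow>
    c 0 = A \<and> c n = B \<and> (\<forall>i<n. c i \<subset> c (Suc i)) \<and> (\<forall>i\<le>n. submod sc (c i))"

definition length_le :: "('r::comm_ring_1 \<Rightarrow> 'v::ab_group_add \<Rightarrow> 'v) \<Rightarrow> 'v set \<Rightarrow> 'v set \<Rightarrow> nat \<Rightarrow> bool"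
  where "length_le sc A B p \<longleftrightarrow> (\<forall>n c. strict_chain sc A B n c \<longrightarrow> n \<le> p)"

lemma strict_chain_mono:
  assumes c: "strict_chain sc A B n c" and "i \<le> j" "j \<le> n"
  shows "c i \<subseteq> c j"
  using assms(2,3)
proof (induction j rule: dec_induct)
  case (step k)
  then have "c i \<subseteq> c k" "k < n"
    by simp_all
  moreover have "c k \<subset> c (Suc k)"
    using c \<open>k < n\<close> unfolding strict_chain_def by blast
  ultimately show ?case
    by blast
qed simp

lemma strict_chain_less:
  assumes c: "strict_chain sc A B n c" and "i < j" "j \<le> n"
  shows "c i \<subset> c j"
proof -
  obtain j' where j': "j = Suc j'"
    using assms(2) by (cases j) auto
  then have "c i \<subseteq> c j'"
    using strict_chain_mono[OF c] assms by simp
  moreover have "c j' \<subset> c j"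
    using c assms(3) j' unfolding strict_chain_def by simp
  ultimately show ?thesis
    by blast
qed

lemma strict_chain_between:
  "strict_chain sc A B n c \<Longrightarrow> i \<le> n \<Longrightarrow> A \<subseteq> c i \<and> c i \<subseteq> B"
  using strict_chain_mono[of sc A B n c 0 i] strict_chain_mono[of sc A B n c i n]
  unfolding strict_chain_def by auto

lemma strict_chain_submod: "strict_chain sc A B n c \<Longrightarrow> submod sc A \<and> submod sc B"
  unfolding strict_chain_def by (metis le0 order_refl)

lemma strict_chain_refl: "submod sc A \<Longrightarrow> strict_chain sc A A 0 (\<lambda>_. A)"
  unfolding strict_chain_def by simp

lemma strict_chain_single:
  "submod sc A \<Longrightarrow> submod sc B \<Longrightarrow> A \<subset> B \<Longrightarrow> strict_chain sc A B 1 (\<lambda>i. if i = 0 then A else B)"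
  unfolding strict_chain_def by auto

lemma strict_chain_exists:
  assumes "submod sc A" "submod sc B" "A \<subseteq> B"
  shows "\<exists>n c. strict_chain sc A B n c"
  using strict_chain_refl[OF assms(1)] strict_chain_single[OF assms(1,2)] assms(3)
  by (cases "A = B") blast+

lemma strict_chain_append:
  assumes c: "strict_chain sc A B n c" and d: "strict_chain sc B C k d"
  shows "strict_chain sc A C (n + k) (\<lambda>i. if i \<le> n then c i else d (i - n))"
  unfolding strict_chain_def
proof (intro conjI allI impI)
  fix i assume i: "i < n + k"
  consider "Suc i \<le> n" | "i = n" | "n < i"
    by linarith
  then show "(if i \<le> n then c i else d (i - n)) \<subset> (if Suc i \<le> n then c (Suc i) else d (Suc i - n))"
  proof cases
    case 2
    then show ?thesis
      using c d i unfolding strict_chain_def by auto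
  next
    case 3
    then have "Suc i - n = Suc (i - n)"
      by simp
    then show ?thesis
      using d i 3 unfolding strict_chain_def by auto
  qed (use c in \<open>auto simp: strict_chain_def\<close>)
qed (use c d in \<open>auto simp: strict_chain_def\<close>)

lemma strict_chain_tl:
  "strict_chain sc A C (Suc n) c \<Longrightarrow> strict_chain sc (c 1) C n (\<lambda>i. c (Suc i))"
  unfolding strict_chain_def by auto

lemma strict_chain_image:
  assumes c: "strict_chain scA A B n c"
    and sub: "\<And>X. submod scA X \<Longrightarrow> A \<subseteq> X \<Longrightarrow> X \<subseteq> B \<Longrightarrow> submod scB (f X)"
    and strict: "\<And>X Y. submod scA X \<Longrightarrow> submod scA Y \<Longrightarrow> A \<subseteq> X \<Longrightarrow> Y \<subseteq> B \<Longrightarrow> X \<subset> Y \<Longrightarrow>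
      f X \<subset> f Y"
  shows "strict_chain scB (f A) (f B) n (\<lambda>i. f (c i))"
  unfolding strict_chain_def
proof (intro conjI allI impI)
  fix i assume "i < n"
  then show "f (c i) \<subset> f (c (Suc i))"
    using strict c strict_chain_between[OF c, of i] strict_chain_between[OF c, of "Suc i"]
    unfolding strict_chain_def by auto
next
  fix i assume "i \<le> n"
  then show "submod scB (f (c i))"
    using sub c strict_chain_between[OF c, of i] unfolding strict_chain_def by auto
qed (use c in \<open>auto simp: strict_chain_def\<close>)

lemma length_le_image:
  assumes "length_le scB (f A) (f B) p"
    and "\<And>X. submod scA X \<Longrightarrow> A \<subseteq> X \<Longrightarrow> X \<subseteq> B \<Longrightarrow> submod scB (f X)"
    and "\<And>X Y. submod scA X \<Longrightarrow> submod scA Y \<Longrightarrow> A \<subseteq> X \<Longrightarrow> Y \<subseteq> B \<Longrightarrow> X \<subset> Y \<Longrightarrow>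
      f X \<subset> f Y"
  shows "length_le scA A B p"
  using assms strict_chain_image[of scA A B _ _ scB f] unfolding length_le_def by blast

lemma length_le_mono: "length_le sc A B p \<Longrightarrow> p \<le> q \<Longrightarrow> length_le sc A B q"
  unfolding length_le_def by (meson order_trans)

lemma length_le_refl: "length_le sc A A 0"
  unfolding length_le_def
proof (intro allI impI)
  fix n c assume c: "strict_chain sc A A n c"
  show "n \<le> 0"
  proof (rule ccontr)
    assume "\<not> n \<le> 0"
    then have "c 0 \<subset> c n"
      using strict_chain_less[OF c, of 0 n] by simp
    then show False
      using c unfolding strict_chain_def by simp
  qed
qed

lemma length_le_one:
  assumes "\<And>Y. submod sc Y \<Longrightarrow> A \<subset> Y \<Longrightarrow> Y \<subseteq> B \<Longrightarrow> Y = B"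
  shows "length_le sc A B 1"
  unfolding length_le_def
proof (intro allI impI)
  fix n c assume c: "strict_chain sc A B n c"
  show "n \<le> 1"
  proof (rule ccontr)
    assume "\<not> n \<le> 1"
    then have n2: "2 \<le> n"
      by simp
    have "c 0 \<subset> c 1" "c 1 \<subset> c 2"
      using strict_chain_less[OF c] n2 by simp_all
    moreover have "c 2 \<subseteq> B"
      using strict_chain_between[OF c n2] by simp
    moreover have "submod sc (c 1)" "c 0 = A"
      using c n2 unfolding strict_chain_def by simp_all
    ultimately show False
      using assms[of "c 1"] by blast
  qed
qed

lemma length_le_Suc_left:
  assumes "length_le sc A C p" "submod sc A" "A \<subset> B" "strict_chain sc B C n d"
  shows "Suc n \<le> p"
proof -
  have "submod sc B"
    using strict_chain_submod[OF assms(4)] by simp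
  from strict_chain_append[OF strict_chain_single[OF assms(2) this assms(3)] assms(4)]
  show ?thesis
    using assms(1) unfolding length_le_def by fastforce
qed

lemma length_le_Suc_right:
  assumes "length_le sc A C p" "submod sc C" "B \<subset> C" "strict_chain sc A B n d"
  shows "Suc n \<le> p"
proof -
  have "submod sc B"
    using strict_chain_submod[OF assms(4)] by simp
  from strict_chain_append[OF assms(4) strict_chain_single[OF this assms(2,3)]]
  show ?thesis
    using assms(1) unfolding length_le_def by fastforce
qed

lemma length_le_shrink_left:
  assumes "length_le sc A C p" "submod sc A" "A \<subset> B"
  shows "length_le sc B C (p - 1)"
  unfolding length_le_def
proof (intro allI impI)
  fix n d assume "strict_chain sc B C n d"
  from length_le_Suc_left[OF assms this] show "n \<le> p - 1"
    by simp
qed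

lemma length_le_shrink_right:
  assumes "length_le sc A C p" "submod sc C" "B \<subset> C"
  shows "length_le sc A B (p - 1)"
  unfolding length_le_def
proof (intro allI impI)
  fix n d assume "strict_chain sc A B n d"
  from length_le_Suc_right[OF assms this] show "n \<le> p - 1"
    by simp
qed

lemma length_le_subinterval:
  assumes "length_le sc A C p" "submod sc A" "submod sc C" "A \<subseteq> A'" "B' \<subseteq> C"
  shows "length_le sc A' B' p"
  unfolding length_le_def
proof (intro allI impI)
  fix n d assume d: "strict_chain sc A' B' n d"
  obtain n1 c1 where "strict_chain sc A A' n1 c1"
    using strict_chain_exists[OF assms(2) _ assms(4)] strict_chain_submod[OF d] by blast
  moreover obtain n2 c2 where "strict_chain sc B' C n2 c2"
    using strict_chain_exists[OF _ assms(3) assms(5)] strict_chain_submod[OF d] by blast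
  ultimately have "\<exists>c. strict_chain sc A C (n1 + n + n2) c"
    using strict_chain_append[OF strict_chain_append[OF _ d]] by blast
  then show "n \<le> p"
    using assms(1) unfolding length_le_def by fastforce
qed

lemma set_plus_upper_left:
  fixes A B :: "'a::comm_monoid_add set"
  shows "0 \<in> B \<Longrightarrow> A \<subseteq> A + B"
  using set_zero_plus2[of B A] by (simp add: add.commute)

lemma set_plus_least:
  assumes "submod sc C" "A \<subseteq> C" "B \<subseteq> C"
  shows "A + B \<subseteq> C"
proof
  fix x assume "x \<in> A + B"
  then obtain a b where "x = a + b" "a \<in> A" "b \<in> B"
    by (rule set_plus_elim)
  then show "x \<in> C"
    using submod_add[OF assms(1)] assms(2,3) by blast
qed

lemma modular_strict:
  assumes "module sc" "submod sc X" "submod sc Y" "X' \<subseteq> X" "X \<subset> Y" "Y \<subseteq> X' + B"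
  shows "X \<inter> B \<subset> Y \<inter> B"
proof (rule ccontr)
  assume "\<not> X \<inter> B \<subset> Y \<inter> B"
  then have YB: "Y \<inter> B \<subseteq> X"
    using assms(5) by blast
  have "Y \<subseteq> X"
  proof
    fix y assume y: "y \<in> Y"
    then have "y \<in> X' + B"
      using assms(6) by blast
    then obtain c b where cb: "y = c + b" "c \<in> X'" "b \<in> B"
      by (rule set_plus_elim)
    then have "c \<in> Y"
      using assms(4,5) by blast
    from submod_diff[OF assms(1,3) y this] have "b \<in> Y"
      using cb(1) by simp
    then have "b \<in> X" "c \<in> X"
      using YB cb assms(4) by blast+
    then show "y \<in> X"
      using submod_add[OF assms(2)] cb(1) by blast
  qed
  then show False
    using assms(5) by blast
qed

text \<open>Second isomorphism theorem, \<open>(X + B) / X \<cong> B / (X \<inter> B)\<close>, in terms of lengths.\<close>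

lemma length_le_set_plus:
  assumes "module sc" "submod sc X" "submod sc B" "length_le sc (X \<inter> B) B p"
  shows "length_le sc X (X + B) p"
proof (rule length_le_image[where f = "\<lambda>Y. Y \<inter> B" and scB = sc])
  have "B \<subseteq> X + B"
    using set_zero_plus2[OF submod_zero[OF assms(2)]] .
  then show "length_le sc (X \<inter> B) ((X + B) \<inter> B) p"
    using assms(4) by (simp add: Int_absorb1)
next
  fix Y assume "submod sc Y"
  then show "submod sc (Y \<inter> B)"
    by (rule submod_Int[OF _ assms(3)])
next
  fix Y Z assume "submod sc Y" "submod sc Z" "X \<subseteq> Y" "Z \<subseteq> X + B" "Y \<subset> Z"
  then show "Y \<inter> B \<subset> Z \<inter> B"
    by (intro modular_strict[OF assms(1), of Y Z X])
qed

lemma length_le_add_chain: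
  assumes "module sc"
  shows "strict_chain sc A C n c \<Longrightarrow> submod sc B \<Longrightarrow> A \<subseteq> B \<Longrightarrow> B \<subseteq> C \<Longrightarrow>
    length_le sc A B p \<Longrightarrow> length_le sc B C q \<Longrightarrow> n \<le> p + q"
proof (induction n arbitrary: A c B p q)
  case (Suc n)
  note ch = Suc.prems(1) and B = Suc.prems(2)
  have sA: "submod sc A" and sC: "submod sc C"
    using strict_chain_submod[OF ch] by auto
  define c1 where "c1 = c 1"
  define B' where "B' = c1 + B"
  have sc1: "submod sc c1" and Ac1: "A \<subset> c1"
    using ch unfolding strict_chain_def c1_def by auto
  have tl: "strict_chain sc c1 C n (\<lambda>i. c (Suc i))"
    using strict_chain_tl[OF ch] c1_def by simp
  have sB': "submod sc B'"
    unfolding B'_def by (rule submod_set_plus[OF assms sc1 B])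
  have c1B': "c1 \<subseteq> B'"
    unfolding B'_def by (rule set_plus_upper_left[OF submod_zero[OF B]])
  have BB': "B \<subseteq> B'"
    unfolding B'_def by (rule set_zero_plus2[OF submod_zero[OF sc1]])
  have "c1 \<subseteq> C"
    using strict_chain_between[OF ch, of 1] c1_def by simp
  then have B'C: "B' \<subseteq> C"
    unfolding B'_def using set_plus_least[OF sC] Suc.prems(4) by blast
  define p' where "p' = (if A \<subset> c1 \<inter> B then p - 1 else p)"
  define q' where "q' = (if B \<subset> B' then q - 1 else q)"
  have "A \<subseteq> c1 \<inter> B"
    using Ac1 Suc.prems(3) by blast
  then have "length_le sc (c1 \<inter> B) B p'"
    using length_le_shrink_left[OF Suc.prems(5) sA, of "c1 \<inter> B"] Suc.prems(5)
    unfolding p'_def by (cases "A \<subset> c1 \<inter> B") (simp_all add: psubset_eq)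
  then have "length_le sc c1 B' p'"
    unfolding B'_def by (rule length_le_set_plus[OF assms sc1 B])
  moreover have "length_le sc B' C q'"
    using length_le_shrink_left[OF Suc.prems(6) B, of B'] Suc.prems(6) BB'
    unfolding q'_def by (cases "B \<subset> B'") (simp_all add: psubset_eq)
  ultimately have "n \<le> p' + q'"
    by (rule Suc.IH[OF tl sB' c1B' B'C])
  moreover have "A \<subset> c1 \<inter> B \<or> B \<subset> B'"
  proof (rule ccontr)
    assume "\<not> (A \<subset> c1 \<inter> B \<or> B \<subset> B')"
    then have "\<not> A \<subset> c1 \<inter> B" "\<not> B \<subset> B'"
      by simp_all
    then have "c1 \<inter> B = A" "B' = B"
      using \<open>A \<subseteq> c1 \<inter> B\<close> BB' by (metis psubsetI)+
    then have "c1 = A"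
      using c1B' by (simp add: Int_absorb2)
    then show False
      using Ac1 by simp
  qed
  moreover have "1 \<le> p" if "A \<subset> c1 \<inter> B"
  proof -
    have "A \<subset> B"
      using that by blast
    from length_le_Suc_left[OF Suc.prems(5) sA this strict_chain_refl[OF B]] show ?thesis
      by simp
  qed
  moreover have "1 \<le> q" if "B \<subset> B'"
  proof -
    have "B \<subset> C"
      using that B'C by blast
    from length_le_Suc_right[OF Suc.prems(6) sC this strict_chain_refl[OF B]] show ?thesis
      by simp
  qed
  ultimately show ?case
    unfolding p'_def q'_def by (auto split: if_splits)
qed simp

lemma length_le_add:
  assumes "module sc" "submod sc B" "A \<subseteq> B" "B \<subseteq> C" "length_le sc A B p" "length_le sc B C q"
  shows "length_le sc A C (p + q)"
  using length_le_add_chain[OF assms(1) _ assms(2-6)] unfolding length_le_def by blast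

lemma length_le_kernel_image:
  assumes mA: "module scA" and mB: "module scB" and V: "submod scA V"
    and add: "\<And>x y. x \<in> V \<Longrightarrow> y \<in> V \<Longrightarrow> f (x + y) = f x + f y"
    and scale: "\<And>r x. x \<in> V \<Longrightarrow> f (scA r x) = scB r (f x)"
    and ker: "length_le scA {0} {x \<in> V. f x = 0} p"
    and img: "length_le scB {0} (f ` V) q"
  shows "length_le scA {0} V (p + q)"
proof -
  let ?K = "{x \<in> V. f x = 0}"
  have f0: "f 0 = 0"
    using add[OF submod_zero[OF V] submod_zero[OF V]] by simp
  have sK: "submod scA ?K"
    unfolding submod_def using V add scale f0 submod_add[OF V] submod_scale[OF V] submod_zero[OF V]
      module.scale_zero_right[OF mB] by auto
  have "length_le scA ?K V q"
  proof (rule length_le_image[where f = "\<lambda>X. f ` X" and scB = scB])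
    have "f ` ?K = {0}"
      using submod_zero[OF V] f0 by auto
    then show "length_le scB (f ` ?K) (f ` V) q"
      using img by simp
  next
    fix X assume "submod scA X" "?K \<subseteq> X" "X \<subseteq> V"
    then show "submod scB (f ` X)"
      using submod_image[of scA X f scB] add scale by blast
  next
    fix X Y assume XY: "submod scA X" "submod scA Y" "?K \<subseteq> X" "Y \<subseteq> V" "X \<subset> Y"
    show "f ` X \<subset> f ` Y"
    proof
      show "f ` X \<subseteq> f ` Y"
        using XY by blast
      show "f ` X \<noteq> f ` Y"
      proof
        assume eq: "f ` X = f ` Y"
        obtain y where y: "y \<in> Y" "y \<notin> X"
          using XY(5) by blast
        then obtain x where x: "x \<in> X" "f x = f y"
          using eq by (metis imageE imageI)
        have xy: "x \<in> V" "y \<in> V" "x \<in> Y"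
          using x y XY by auto
        have "f (y - x) + f x = f y"
          using add[OF submod_diff[OF mA V xy(2,1)] xy(1)] by simp
        then have "y - x \<in> X"
          using x(2) submod_diff[OF mA V xy(2,1)] XY(3) by auto
        from submod_add[OF XY(1) this x(1)] show False
          using y by simp
      qed
    qed
  qed
  moreover have "{0} \<subseteq> ?K" "?K \<subseteq> V"
    using submod_zero[OF V] f0 by auto
  ultimately show ?thesis
    using length_le_add[OF mA sK _ _ ker] by blast
qed

definition chain_length :: "('r::comm_ring_1 \<Rightarrow> 'v::ab_group_add \<Rightarrow> 'v) \<Rightarrow> 'v set \<Rightarrow> 'v set \<Rightarrow> nat"
  where "chain_length sc A B = Max {n. \<exists>c. strict_chain sc A B n c}"

lemma chain_length_maximal:
  assumes "length_le sc A B p" "submod sc A" "submod sc B" "A \<subseteq> B"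
  shows "\<exists>c. strict_chain sc A B (chain_length sc A B) c" "length_le sc A B (chain_length sc A B)"
proof -
  let ?S = "{n. \<exists>c. strict_chain sc A B n c}"
  have ne: "?S \<noteq> {}"
    using strict_chain_exists[OF assms(2-4)] by blast
  have "?S \<subseteq> {..p}"
    using assms(1) unfolding length_le_def by blast
  then have fin: "finite ?S"
    by (rule finite_subset) simp
  show "\<exists>c. strict_chain sc A B (chain_length sc A B) c"
    using Max_in[OF fin ne] unfolding chain_length_def by blast
  show "length_le sc A B (chain_length sc A B)"
    unfolding length_le_def chain_length_def using Max_ge[OF fin] by blast
qed

lemma chain_length_less:
  assumes "length_le sc A B p" "submod sc A" "submod sc B" "submod sc B'" "A \<subseteq> B'" "B' \<subset> B"
  shows "chain_length sc A B' < chain_length sc A B"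
proof -
  have "length_le sc A B' p"
    using length_le_subinterval[OF assms(1-3)] assms(6) by blast
  then obtain c where "strict_chain sc A B' (chain_length sc A B') c"
    using chain_length_maximal(1)[OF _ assms(2,4,5)] by blast
  moreover have "length_le sc A B (chain_length sc A B)"
    using chain_length_maximal(2)[OF assms(1-3)] assms(5,6) by blast
  ultimately show ?thesis
    using length_le_Suc_right[OF _ assms(3,6)] by fastforce
qed

text \<open>Take the first step of a chain of maximal length.\<close>

lemma length_le_simple_step:
  assumes "length_le sc A B p" "submod sc A" "submod sc B" "A \<subset> B"
  obtains C where "submod sc C" "A \<subset> C" "C \<subseteq> B" "length_le sc C B (p - 1)"
    "\<And>Y. submod sc Y \<Longrightarrow> A \<subseteq> Y \<Longrightarrow> Y \<subseteq> C \<Longrightarrow> Y = A \<or> Y = C"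
proof -
  obtain c where c: "strict_chain sc A B (chain_length sc A B) c"
    and max: "length_le sc A B (chain_length sc A B)"
    using chain_length_maximal[OF assms(1-3)] assms(4) by blast
  obtain N where N: "chain_length sc A B = Suc N"
    using c assms(4) unfolding strict_chain_def by (cases "chain_length sc A B") auto
  have C: "submod sc (c 1)" "A \<subset> c 1" "c 1 \<subseteq> B"
    using c strict_chain_between[OF c, of 1] unfolding N strict_chain_def by auto
  have tl: "strict_chain sc (c 1) B N (\<lambda>i. c (Suc i))"
    using strict_chain_tl[OF c[unfolded N]] .
  have "Y = A \<or> Y = c 1" if Y: "submod sc Y" "A \<subseteq> Y" "Y \<subseteq> c 1" for Y
  proof (rule ccontr)
    assume "\<not> ?thesis"
    then have "A \<subset> Y" "Y \<subset> c 1"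
      using Y by auto
    from strict_chain_append[OF strict_chain_append[OF strict_chain_single[OF assms(2) Y(1) this(1)]
          strict_chain_single[OF Y(1) C(1) this(2)]] tl]
    show False
      using max unfolding N length_le_def by fastforce
  qed
  then show ?thesis
    using that[OF C length_le_shrink_left[OF assms(1,2) C(2)]] by blast
qed

lemma antitone_length_le_stabilizes:
  assumes len: "length_le sc Q V p" and Q: "submod sc Q" and V: "submod sc V"
    and D: "\<And>S. P S \<Longrightarrow> submod sc (D S) \<and> Q \<subseteq> D S \<and> D S \<subseteq> V"
    and anti: "\<And>S S'. P S \<Longrightarrow> P S' \<Longrightarrow> S \<subseteq> S' \<Longrightarrow> D S' \<subseteq> D S" and "P S\<^sub>1"
  shows "\<exists>S0. P S0 \<and> (\<forall>S. P S \<longrightarrow> S0 \<subseteq> S \<longrightarrow> D S = D S0)"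
proof -
  define f where "f S = chain_length sc Q (D S)" for S
  obtain S0 where S0: "P S0" "\<And>S. P S \<Longrightarrow> f S0 \<le> f S"
    using ex_has_least_nat[of P S\<^sub>1 f] \<open>P S\<^sub>1\<close> by blast
  have "D S = D S0" if S: "P S" "S0 \<subseteq> S" for S
  proof (rule ccontr)
    assume "D S \<noteq> D S0"
    then have "D S \<subset> D S0"
      using anti[OF S0(1) S(1) S(2)] by blast
    moreover have "length_le sc Q (D S0) p"
      using length_le_subinterval[OF len Q V] D[OF S0(1)] by blast
    ultimately have "f S < f S0"
      unfolding f_def using D[OF S0(1)] D[OF S(1)] by (intro chain_length_less[OF _ Q]) auto
    then show False
      using S0(2)[OF S(1)] by simp
  qed
  then show ?thesis
    using S0(1) by blast
qed

lemma length_le_ideal_gen_insert_finite: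
  assumes local: "local_ring_with m" and C: "is_ideal C" and F: "finite F" "F \<subseteq> D"
    and mD: "\<And>a d. a \<in> m \<Longrightarrow> d \<in> D \<Longrightarrow> a * d \<in> C"
  shows "length_le (*) C (ideal_gen (C \<union> F)) (card F)"
  using F
proof (induction F rule: finite_induct)
  case empty
  show ?case
    using ideal_gen_idem[OF C] length_le_refl by simp
next
  case (insert g F)
  let ?C' = "ideal_gen (C \<union> F)"
  let ?C'' = "ideal_gen (C \<union> insert g F)"
  have C': "is_ideal ?C'"
    by (rule is_ideal_ideal_gen)
  have CC': "C \<subseteq> ?C'" and C'C'': "?C' \<subseteq> ?C''"
    using ideal_gen_superset[of "C \<union> F"] ideal_gen_mono[of "C \<union> F" "C \<union> insert g F"] by auto
  have gen: "?C'' = ?C' + g *o UNIV"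
    using ideal_gen_insert[of g "C \<union> F"] by simp
  have "length_le (*) ?C' ?C'' 1"
  proof (rule length_le_one)
    fix Y assume Y: "submod (*) Y" "?C' \<subset> Y" "Y \<subseteq> ?C''"
    have Yi: "is_ideal Y"
      using Y(1) is_ideal_iff_submod by blast
    obtain y where y: "y \<in> Y" "y \<notin> ?C'"
      using Y(2) by blast
    then have "y \<in> ?C' + g *o UNIV"
      using Y(3) gen by blast
    then obtain c d where cd: "y = c + d" "c \<in> ?C'" "d \<in> g *o UNIV"
      by (rule set_plus_elim)
    then obtain r where r: "d = g * r"
      by (auto simp: elt_set_times_def)
    have "r \<notin> m"
    proof
      assume "r \<in> m"
      then have "r * g \<in> ?C'"
        using mD[of r g] insert.prems CC' by blast
      then have "y \<in> ?C'"
        using cd r ideal_add[OF C'] by (simp add: mult.commute)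
      then show False
        using y by blast
    qed
    then obtain t where t: "t * r = 1"
      using local_ring_unit[OF local] by blast
    have "g = t * (y - c)"
      using cd r t by (simp add: algebra_simps)
    also have "\<dots> \<in> Y"
      using cd(2) Y(2) y(1) by (intro ideal_mult_left[OF Yi] ideal_diff[OF Yi]) auto
    finally have "g \<in> Y" .
    then have "?C' + g *o UNIV \<subseteq> Y"
      using Y(2) by (intro set_plus_least[OF Y(1)]) (auto simp: elt_set_times_def
          intro: ideal_mult_right[OF Yi])
    then show "Y = ?C''"
      using Y(3) gen by blast
  qed
  then have "length_le (*) C ?C'' (card F + 1)"
    using length_le_add[OF module_mult _ CC' C'C'' insert.IH] insert.prems C' is_ideal_iff_submod
    by blast
  then show ?case
    using insert by simp
qed

lemma length_le_ideal_pow: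
  assumes local: "local_ring_with m" and noeth: "noetherian_ring TYPE('a::comm_ring_1)"
  shows "\<exists>p. length_le (*) (ideal_pow m n :: 'a set) UNIV p"
proof (induction n)
  case 0
  show ?case
    using length_le_refl ideal_pow_0 by metis
next
  case (Suc n)
  then obtain p where p: "length_le (*) (ideal_pow m n) UNIV p"
    by blast
  obtain F where F: "finite F" "ideal_pow m n = ideal_gen F"
    using noeth is_ideal_ideal_pow[of m n] unfolding noetherian_ring_def
    by (elim allE[of _ "ideal_pow m n"]) blast
  let ?C = "ideal_pow m (Suc n)"
  let ?D = "ideal_pow m n"
  have m: "is_ideal m"
    by (rule local_ring_is_ideal[OF local])
  have CD: "?C \<subseteq> ?D"
    by (rule ideal_pow_Suc_subset[OF m])
  have FD: "F \<subseteq> ?D"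
    using F(2) ideal_gen_superset[of F] by simp
  have "ideal_gen (?C \<union> F) = ?D"
  proof
    show "ideal_gen (?C \<union> F) \<subseteq> ?D"
      using ideal_gen_least[OF is_ideal_ideal_pow] CD FD by (metis Un_least)
    show "?D \<subseteq> ideal_gen (?C \<union> F)"
      using F(2) ideal_gen_mono[of F "?C \<union> F"] by simp
  qed
  then have "length_le (*) ?C ?D (card F)"
    using length_le_ideal_gen_insert_finite[OF local is_ideal_ideal_pow[of m "Suc n"] F(1) FD]
      ideal_pow_Suc_mult[of _ m _ n] by simp
  then have "length_le (*) ?C UNIV (card F + p)"
    using length_le_add[OF module_mult _ CD _ _ p] is_ideal_ideal_pow is_ideal_iff_submod by blast
  then show ?case
    by blast
qed

definition scale_fun :: "('a \<Rightarrow> 'e \<Rightarrow> 'e) \<Rightarrow> 'a \<Rightarrow> ('b \<Rightarrow> 'e) \<Rightarrow> 'b \<Rightarrow> 'e"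
  where "scale_fun sc r f = (\<lambda>b. sc r (f b))"

lemma module_scale_fun:
  assumes "module sc"
  shows "module (scale_fun sc)"
proof -
  interpret M: module sc by (rule assms)
  show ?thesis
    by standard (simp_all add: scale_fun_def fun_eq_iff M.scale_right_distrib M.scale_left_distrib)
qed

text \<open>\<open>Hom(B/A, X)\<close> for ideals \<open>A \<subseteq> B\<close>, encoded as maps on the whole ring that are linear on
  \<open>B\<close>, vanish on \<open>A\<close> and are \<open>0\<close> outside \<open>B\<close>.\<close>

definition hom_quot :: "('a::comm_ring_1 \<Rightarrow> 'e::ab_group_add \<Rightarrow> 'e) \<Rightarrow> 'e set \<Rightarrow> 'a set \<Rightarrow> 'a set \<Rightarrow> ('a \<Rightarrow> 'e) set"
  where "hom_quot sc X A B = {\<psi>.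
    (\<forall>a\<in>B. \<forall>b\<in>B. \<psi> (a + b) = \<psi> a + \<psi> b) \<and> (\<forall>r. \<forall>b\<in>B. \<psi> (r * b) = sc r (\<psi> b)) \<and>
    (\<forall>b\<in>B. \<psi> b \<in> X) \<and> (\<forall>a\<in>A. \<psi> a = 0) \<and> (\<forall>b. b \<notin> B \<longrightarrow> \<psi> b = 0)}"

lemma submod_hom_quot:
  assumes "module sc" and X: "submod sc X"
  shows "submod (scale_fun sc) (hom_quot sc X A B)"
proof -
  interpret M: module sc by (rule assms(1))
  show ?thesis
    unfolding submod_def hom_quot_def scale_fun_def
    using submod_zero[OF X] submod_add[OF X] submod_scale[OF X]
    by (auto simp: M.scale_right_distrib algebra_simps)
qed

lemma hom_quot_eq_zero:
  assumes "\<psi> \<in> hom_quot sc X A B" "\<And>b. b \<in> B \<Longrightarrow> \<psi> b = 0"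
  shows "\<psi> = 0"
proof
  fix b
  show "\<psi> b = 0 b"
    using assms unfolding hom_quot_def by (cases "b \<in> B") auto
qed

lemma hom_quot_same:
  assumes "module sc" "0 \<in> X"
  shows "hom_quot sc X A A = {0}"
  using hom_quot_eq_zero[of _ sc X A A] assms module.scale_zero_right[OF assms(1)]
  unfolding hom_quot_def by auto

section \<open>The injective hull of the residue field\<close>

locale injective_hull =
  fixes sc :: "'a::comm_ring_1 \<Rightarrow> 'e::ab_group_add \<Rightarrow> 'e" and m :: "'a set" and u :: 'e
  assumes module: "module sc"
    and local: "local_ring_with m"
    and noetherian: "noetherian_ring TYPE('a)"
    and injective: "injective_mod sc"
    and ann_u: "{r. sc r u = 0} = m"
    and essential: "\<And>N. submod sc N \<Longrightarrow> N \<noteq> {0} \<Longrightarrow> N \<inter> range (\<lambda>r. sc r u) \<noteq> {0}"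
begin

sublocale M: module sc
  by (rule module)

lemma m_is_ideal: "is_ideal m"
  by (rule local_ring_is_ideal[OF local])

lemma u_nonzero: "u \<noteq> 0"
  using ann_u local_ring_one_notin[OF local] by force

lemma m_kills_u: "a \<in> m \<Longrightarrow> sc a u = 0"
  using ann_u by blast

lemma u_mem_submod:
  assumes N: "submod sc N" "N \<noteq> {0}"
  shows "u \<in> N"
proof -
  have "0 \<in> N \<inter> range (\<lambda>r. sc r u)"
    using submod_zero[OF N(1)] M.scale_zero_left[of u] by (metis IntI rangeI)
  then obtain w where w: "w \<in> N" "w \<noteq> 0" "w \<in> range (\<lambda>r. sc r u)"
    using essential[OF N] by blast
  then obtain s where s: "w = sc s u"
    by blast
  then have "s \<notin> m"
    using w(2) m_kills_u by blast
  then obtain t where "t * s = 1"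
    using local_ring_unit[OF local] by blast
  then have "sc t w = u"
    using s by simp
  then show ?thesis
    using submod_scale[OF N(1) w(1), of t] by simp
qed

lemma exists_scale_eq_u:
  assumes "z \<noteq> 0"
  obtains s where "sc s z = u"
proof -
  have "z \<in> range (\<lambda>r. sc r z)"
    using M.scale_one by (metis rangeI)
  then have "u \<in> range (\<lambda>r. sc r z)"
    using u_mem_submod[OF submod_cyclic[OF module]] assms by blast
  then show ?thesis
    using that by (metis rangeE)
qed

lemma socle_eq:
  assumes "\<And>a. a \<in> m \<Longrightarrow> sc a z = 0"
  obtains t where "z = sc t u"
proof (cases "z = 0")
  case True
  then show ?thesis
    using that[of 0] by simp
next
  case False
  then obtain c where c: "sc c z = u"
    by (rule exists_scale_eq_u)
  then have "c \<notin> m"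
    using assms u_nonzero by (metis M.scale_scale M.scale_zero_right mult.commute)
  then obtain t where "t * c = 1"
    using local_ring_unit[OF local] by blast
  then have "sc t u = z"
    using c M.scale_scale[of t c z] by simp
  then show ?thesis
    using that by blast
qed

text \<open>Baer's criterion applied on \<open>A + B\<close> to the map \<open>a + b \<mapsto> \<psi> a\<close>, which is well
  defined because \<open>\<psi>\<close> vanishes on \<open>A \<inter> B\<close>.\<close>

lemma baer_extension:
  assumes A: "is_ideal A" and B: "is_ideal B"
    and add: "\<And>a a'. a \<in> A \<Longrightarrow> a' \<in> A \<Longrightarrow> \<psi> (a + a') = \<psi> a + \<psi> a'"
    and scale: "\<And>r a. a \<in> A \<Longrightarrow> \<psi> (r * a) = sc r (\<psi> a)"
    and vanish: "\<And>a. a \<in> A \<Longrightarrow> a \<in> B \<Longrightarrow> \<psi> a = 0"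
  obtains e where "\<And>a. a \<in> A \<Longrightarrow> sc a e = \<psi> a" "\<And>b. b \<in> B \<Longrightarrow> sc b e = 0"
proof -
  have diff: "\<psi> a - \<psi> a' = \<psi> (a - a')" if "a \<in> A" "a' \<in> A" for a a'
    using add[OF ideal_diff[OF A that] that(2)] by simp
  define g where "g z = \<psi> (SOME a. a \<in> A \<and> (\<exists>b\<in>B. z = a + b))" for z
  have g: "g z = \<psi> a" if "a \<in> A" "b \<in> B" "z = a + b" for z a b
  proof -
    have "\<exists>a. a \<in> A \<and> (\<exists>b\<in>B. z = a + b)"
      using that by blast
    from someI_ex[OF this] obtain a' b' where
      a': "(SOME a. a \<in> A \<and> (\<exists>b\<in>B. z = a + b)) = a'" "a' \<in> A" "b' \<in> B" "z = a' + b'"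
      by blast
    have "a - a' = b' - b"
      using that a' by (simp add: algebra_simps)
    then have "a - a' \<in> B"
      using ideal_diff[OF B a'(3) that(2)] by simp
    then have "\<psi> a - \<psi> a' = 0"
      using diff[OF that(1) a'(2)] vanish[OF ideal_diff[OF A that(1) a'(2)]] by simp
    then show ?thesis
      unfolding g_def a'(1) by simp
  qed
  have "\<forall>x\<in>A + B. \<forall>y\<in>A + B. g (x + y) = g x + g y"
  proof (intro ballI)
    fix x y assume "x \<in> A + B" "y \<in> A + B"
    then obtain a b a' b' where ab: "x = a + b" "y = a' + b'" "a \<in> A" "b \<in> B" "a' \<in> A" "b' \<in> B"
      by (metis set_plus_elim)
    then have "x + y = (a + a') + (b + b')"
      by (simp add: algebra_simps)
    then have "g (x + y) = \<psi> (a + a')"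
      using g[OF ideal_add[OF A ab(3,5)] ideal_add[OF B ab(4,6)]] by simp
    then show "g (x + y) = g x + g y"
      using add[OF ab(3,5)] g[OF ab(3,4,1)] g[OF ab(5,6,2)] by simp
  qed
  moreover have "\<forall>r. \<forall>x\<in>A + B. g (r * x) = sc r (g x)"
  proof (intro allI ballI)
    fix r x assume "x \<in> A + B"
    then obtain a b where ab: "x = a + b" "a \<in> A" "b \<in> B"
      by (metis set_plus_elim)
    then have "r * x = r * a + r * b"
      by (simp add: algebra_simps)
    then have "g (r * x) = \<psi> (r * a)"
      using g[OF ideal_mult_left[OF A ab(2)] ideal_mult_left[OF B ab(3)]] by simp
    then show "g (r * x) = sc r (g x)"
      using scale[OF ab(2)] g[OF ab(2,3,1)] by simp
  qed
  ultimately have "\<exists>e. \<forall>z\<in>A + B. g z = sc z e"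
    using injective is_ideal_set_plus[OF A B] unfolding injective_mod_def by blast
  then obtain e where e: "\<And>z. z \<in> A + B \<Longrightarrow> g z = sc z e"
    by blast
  show ?thesis
  proof (rule that)
    fix a assume a: "a \<in> A"
    have "a + 0 \<in> A + B"
      by (rule set_plus_intro[OF a ideal_zero[OF B]])
    then show "sc a e = \<psi> a"
      using e g[OF a ideal_zero[OF B]] by simp
  next
    fix b assume b: "b \<in> B"
    have "0 + b \<in> A + B"
      by (rule set_plus_intro[OF ideal_zero[OF A] b])
    then show "sc b e = 0"
      using e g[OF ideal_zero[OF A] b] vanish[OF ideal_zero[OF A] ideal_zero[OF B]] by simp
  qed
qed

lemma ann_annE_ideal:
  assumes L: "is_ideal L"
  shows "ann sc (annE sc L) = L"
proof
  show "L \<subseteq> ann sc (annE sc L)"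
    unfolding ann_def annE_def by blast
next
  show "ann sc (annE sc L) \<subseteq> L"
  proof
    fix r assume r: "r \<in> ann sc (annE sc L)"
    show "r \<in> L"
    proof (rule ccontr)
      assume "r \<notin> L"
      have "1 \<notin> {s. s * r \<in> L}"
        using \<open>r \<notin> L\<close> by simp
      then have "{s. s * r \<in> L} \<subseteq> m"
        by (rule local_ring_proper_ideal_subset[OF local is_ideal_mult_preimage[OF L]])
      then have colon: "s \<in> m" if "r * s \<in> L" for s
        using that by (auto simp: mult.commute)
      define \<psi> where "\<psi> z = sc (SOME s. z = r * s) u" for z
      have \<psi>: "\<psi> (r * s) = sc s u" for s
      proof -
        obtain s' where s': "(SOME s'. r * s = r * s') = s'" "r * s = r * s'"
          by (metis (mono_tags) someI_ex)
        then have "r * (s - s') \<in> L"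
          using ideal_zero[OF L] by (simp add: right_diff_distrib)
        then have "sc (s - s') u = 0"
          using colon m_kills_u by blast
        then show ?thesis
          unfolding \<psi>_def s'(1) by (simp add: M.scale_left_diff_distrib)
      qed
      obtain e where e: "\<And>a. a \<in> r *o UNIV \<Longrightarrow> sc a e = \<psi> a" "\<And>l. l \<in> L \<Longrightarrow> sc l e = 0"
      proof (rule baer_extension[OF is_ideal_elt_set_times[OF is_ideal_UNIV] L])
        fix a a' assume "a \<in> r *o UNIV" "a' \<in> r *o UNIV"
        then obtain s s' where "a = r * s" "a' = r * s'"
          by (auto simp: elt_set_times_def)
        then show "\<psi> (a + a') = \<psi> a + \<psi> a'"
          using \<psi>[of "s + s'"] \<psi>[of s] \<psi>[of s'] by (simp add: distrib_left M.scale_left_distrib)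
      next
        fix t a assume "a \<in> r *o UNIV"
        then obtain s where "a = r * s"
          by (auto simp: elt_set_times_def)
        then show "\<psi> (t * a) = sc t (\<psi> a)"
          using \<psi>[of "t * s"] \<psi>[of s] by (simp add: mult.left_commute)
      next
        fix a assume "a \<in> r *o UNIV" "a \<in> L"
        then obtain s where "a = r * s" "r * s \<in> L"
          by (auto simp: elt_set_times_def)
        then show "\<psi> a = 0"
          using \<psi> colon m_kills_u by simp
      qed blast
      have "e \<in> annE sc L"
        using e(2) unfolding annE_def by blast
      then have "sc r e = 0"
        using r unfolding ann_def by blast
      moreover have "sc r e = u"
        using e(1)[OF set_times_intro2[OF UNIV_I, of r 1]] \<psi>[of 1] by simp
      ultimately show False
        using u_nonzero by simp
    qed
  qed
qed

lemma annE_Int: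
  assumes A: "is_ideal A" and B: "is_ideal B"
  shows "annE sc (A \<inter> B) = annE sc A + annE sc B"
proof
  show "annE sc (A \<inter> B) \<subseteq> annE sc A + annE sc B"
  proof
    fix x assume x: "x \<in> annE sc (A \<inter> B)"
    obtain e where e: "\<And>a. a \<in> A \<Longrightarrow> sc a e = sc a x" "\<And>b. b \<in> B \<Longrightarrow> sc b e = 0"
    proof (rule baer_extension[OF A B, of "\<lambda>a. sc a x"])
      show "\<And>a. a \<in> A \<Longrightarrow> a \<in> B \<Longrightarrow> sc a x = 0"
        using x unfolding annE_def by blast
    qed (auto simp: M.scale_left_distrib)
    have "x - e \<in> annE sc A" "e \<in> annE sc B"
      using e unfolding annE_def by (simp_all add: M.scale_right_diff_distrib)
    from set_plus_intro[OF this] show "x \<in> annE sc A + annE sc B"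
      by simp
  qed
next
  show "annE sc A + annE sc B \<subseteq> annE sc (A \<inter> B)"
  proof
    fix x assume "x \<in> annE sc A + annE sc B"
    then obtain y z where "x = y + z" "y \<in> annE sc A" "z \<in> annE sc B"
      by (rule set_plus_elim)
    then show "x \<in> annE sc (A \<inter> B)"
      unfolding annE_def by (simp add: M.scale_right_distrib)
  qed
qed

lemma power_of_m_kills:
  assumes a: "a \<in> m"
  shows "\<exists>n. sc (a ^ n) y = 0"
proof -
  define I where "I n = ann sc {sc (a ^ n) y}" for n
  have "I n \<subseteq> I (Suc n)" for n
  proof
    fix x assume "x \<in> I n"
    then have "sc a (sc x (sc (a ^ n) y)) = 0"
      unfolding I_def ann_def by simp
    moreover have "sc a (sc x (sc (a ^ n) y)) = sc x (sc (a ^ Suc n) y)"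
      by (simp add: mult.left_commute)
    ultimately show "x \<in> I (Suc n)"
      unfolding I_def ann_def by simp
  qed
  then obtain N where N: "\<forall>n\<ge>N. I n = I N"
    using noetherian_ascending_chain[OF noetherian, of I] is_ideal_ann[OF module] unfolding I_def
    by blast
  show ?thesis
  proof (rule ccontr)
    assume "\<nexists>n. sc (a ^ n) y = 0"
    then obtain s where s: "sc s (sc (a ^ N) y) = u"
      using exists_scale_eq_u by blast
    then have "sc a (sc s (sc (a ^ N) y)) = 0"
      using m_kills_u[OF a] by simp
    then have "s \<in> I (Suc N)"
      unfolding I_def ann_def by (simp add: mult.commute mult.left_commute)
    then have "s \<in> I N"
      using N by (metis le_SucI order_refl)
    then show False
      using s u_nonzero unfolding I_def ann_def by simp
  qed
qed

lemma ideal_pow_m_subset_ann: "\<exists>K. ideal_pow m K \<subseteq> ann sc {y}"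
proof -
  obtain G where G: "finite G" "m = ideal_gen G"
    using noetherian m_is_ideal unfolding noetherian_ring_def by (elim allE[of _ m]) blast
  have "\<forall>g\<in>G. \<exists>n. sc (g ^ n) y = 0"
    using G(2) ideal_gen_superset[of G] power_of_m_kills by blast
  then obtain n where n: "\<And>g. g \<in> G \<Longrightarrow> sc (g ^ n g) y = 0"
    by metis
  define N where "N = Max (n ` G)"
  have "g ^ N \<in> ann sc {y}" if g: "g \<in> G" for g
  proof -
    have "n g \<le> N"
      unfolding N_def using G(1) g by simp
    then have "g ^ N = g ^ (N - n g) * g ^ n g"
      by (simp flip: power_add)
    then show ?thesis
      unfolding ann_def using n[OF g] by (simp flip: M.scale_scale)
  qed
  then show ?thesis
    using ideal_pow_subset_if_generators_pow[OF G is_ideal_ann[OF module]] by blast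
qed

lemma hom_quot_simple_value:
  assumes H: "\<psi> \<in> hom_quot sc X A C" and C: "C = A + b *o UNIV" and a: "a \<in> A" and A: "is_ideal A"
  shows "\<psi> (a + r * b) = sc r (\<psi> b)"
proof -
  have mem: "a' + b * r' \<in> C" if "a' \<in> A" for a' r'
    unfolding C by (rule set_plus_intro[OF that set_times_intro2[OF UNIV_I]])
  have "a \<in> C" "r * b \<in> C" "b \<in> C"
    using mem[OF a, of 0] mem[OF ideal_zero[OF A], of r] mem[OF ideal_zero[OF A], of 1]
    by (simp_all add: mult.commute)
  then have "\<psi> (a + r * b) = \<psi> a + sc r (\<psi> b)"
    using H unfolding hom_quot_def by simp
  then show ?thesis
    using H a unfolding hom_quot_def by simp
qed

lemma length_le_hom_quot_simple:
  assumes A: "is_ideal A" and C: "C = A + b *o UNIV" and mb: "b *o m \<subseteq> A"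
  shows "length_le (scale_fun sc) {0} (hom_quot sc X A C) 1"
proof (rule length_le_one)
  fix Y assume Y: "submod (scale_fun sc) Y" "{0} \<subset> Y" "Y \<subseteq> hom_quot sc X A C"
  obtain \<psi>0 where \<psi>0: "\<psi>0 \<in> Y" "\<psi>0 \<noteq> 0"
    using Y(2) by blast
  have H0: "\<psi>0 \<in> hom_quot sc X A C"
    using \<psi>0 Y(3) by blast
  have "\<psi>0 b \<noteq> 0"
  proof
    assume "\<psi>0 b = 0"
    then have "\<psi>0 d = 0" if "d \<in> C" for d
      using that hom_quot_simple_value[OF H0 C _ A] unfolding C
      by (auto elim!: set_plus_elim simp: elt_set_times_def mult.commute)
    then show False
      using hom_quot_eq_zero[OF H0] \<psi>0(2) by blast
  qed
  then obtain s where s: "sc s (\<psi>0 b) = u"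
    by (rule exists_scale_eq_u)
  show "Y = hom_quot sc X A C"
  proof
    show "hom_quot sc X A C \<subseteq> Y"
    proof
      fix \<phi> assume H: "\<phi> \<in> hom_quot sc X A C"
      have "sc a (\<phi> b) = 0" if "a \<in> m" for a
      proof -
        have "a * b \<in> A"
          using mb that by (auto simp: elt_set_times_def mult.commute)
        then show ?thesis
          using H hom_quot_simple_value[OF H C ideal_zero[OF A] A, of a]
          unfolding hom_quot_def by simp
      qed
      then obtain t where t: "\<phi> b = sc t u"
        by (rule socle_eq)
      have "\<phi> = scale_fun sc (t * s) \<psi>0"
      proof
        fix d
        show "\<phi> d = scale_fun sc (t * s) \<psi>0 d"
        proof (cases "d \<in> C")
          case True
          then obtain a r where "d = a + r * b" "a \<in> A"
            unfolding C by (auto elim!: set_plus_elim simp: elt_set_times_def mult.commute)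
          then have "\<phi> d = sc r (sc t u)" "\<psi>0 d = sc r (\<psi>0 b)"
            using hom_quot_simple_value[OF H C _ A] hom_quot_simple_value[OF H0 C _ A] t by simp_all
          moreover have "sc (t * s) (sc r (\<psi>0 b)) = sc r (sc t (sc s (\<psi>0 b)))"
            by (simp add: mult.commute mult.left_commute)
          ultimately show ?thesis
            unfolding scale_fun_def using s by simp
        next
          case False
          then show ?thesis
            using H H0 unfolding hom_quot_def scale_fun_def by simp
        qed
      qed
      then show "\<phi> \<in> Y"
        using submod_scale[OF Y(1) \<psi>0(1)] by simp
    qed
  qed (use Y in blast)
qed

lemma length_le_hom_quot:
  assumes X: "submod sc X"
  shows "length_le (*) A B p \<Longrightarrow> is_ideal A \<Longrightarrow> is_ideal B \<Longrightarrow> A \<subseteq> B \<Longrightarrow>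
    length_le (scale_fun sc) {0} (hom_quot sc X A B) p"
proof (induction p arbitrary: A)
  case 0
  have "A = B"
  proof (rule ccontr)
    assume "A \<noteq> B"
    then have "A \<subset> B"
      using "0.prems"(4) by blast
    from length_le_Suc_left[OF "0.prems"(1) _ this strict_chain_refl] show False
      using "0.prems"(2,3) is_ideal_iff_submod by blast
  qed
  then have "hom_quot sc X A B = {0}"
    using hom_quot_same[OF module submod_zero[OF X]] by simp
  then show ?case
    using length_le_refl by (simp only:)
next
  case (Suc p)
  note AB = Suc.prems(1) and A = Suc.prems(2) and B = Suc.prems(3)
  have mF: "module (scale_fun sc)"
    by (rule module_scale_fun[OF module])
  have s0: "submod (scale_fun sc) {0 :: 'a \<Rightarrow> 'e}"
    by (rule submod_zero_set[OF mF])
  show ?case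
  proof (cases "A = B")
    case True
    then have "hom_quot sc X A B = {0}"
      using hom_quot_same[OF module submod_zero[OF X]] by simp
    then show ?thesis
      using length_le_mono[OF length_le_refl[of "scale_fun sc" "{0}"], of "Suc p"] by (metis le0)
  next
    case False
    then have "A \<subset> B"
      using Suc.prems(4) by blast
    then obtain C where sC: "submod (*) C" and AC: "A \<subset> C" and CB: "C \<subseteq> B"
      and CB_len: "length_le (*) C B p"
      and simple: "\<And>Y. submod (*) Y \<Longrightarrow> A \<subseteq> Y \<Longrightarrow> Y \<subseteq> C \<Longrightarrow> Y = A \<or> Y = C"
      using length_le_simple_step[OF AB] A B is_ideal_iff_submod by (metis diff_Suc_1)
    have Ci: "is_ideal C"
      using sC is_ideal_iff_submod by blast
    obtain b where C: "C = A + b *o UNIV" and mb: "b *o m \<subseteq> A"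
      using local_ring_simple_step[OF local A Ci AC] simple is_ideal_iff_submod by metis
    have IH: "length_le (scale_fun sc) {0} (hom_quot sc X C B) p"
      using Suc.IH[OF CB_len Ci B CB] .
    define res where "res \<psi> = (\<lambda>d. if d \<in> C then \<psi> d else 0)" for \<psi> :: "'a \<Rightarrow> 'e"
    have res: "res \<psi> \<in> hom_quot sc X A C" if "\<psi> \<in> hom_quot sc X A B" for \<psi>
      using that CB AC ideal_add[OF Ci] ideal_mult_left[OF Ci]
      unfolding hom_quot_def res_def by (auto simp: subset_iff)
    have ker: "{\<psi> \<in> hom_quot sc X A B. res \<psi> = 0} \<subseteq> hom_quot sc X C B"
      unfolding hom_quot_def res_def by (auto simp: fun_eq_iff)
    have "length_le (scale_fun sc) {0} (hom_quot sc X A B) (p + 1)"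
    proof (rule length_le_kernel_image[OF mF mF submod_hom_quot[OF module X]])
      show "length_le (scale_fun sc) {0} {\<psi> \<in> hom_quot sc X A B. res \<psi> = 0} p"
        using length_le_subinterval[OF IH s0 submod_hom_quot[OF module X] _ ker] by blast
      show "length_le (scale_fun sc) {0} (res ` hom_quot sc X A B) 1"
        using length_le_subinterval[OF length_le_hom_quot_simple[OF A C mb] s0
            submod_hom_quot[OF module X], of "{0}"] res by blast
    qed (simp_all add: res_def scale_fun_def fun_eq_iff)
    then show ?thesis
      by (simp only: Suc_eq_plus1)
  qed
qed

lemma length_le_cyclic:
  assumes "length_le sc {0} (range (\<lambda>r. sc r x)) p"
  shows "length_le (*) (ann sc {x}) UNIV p"
proof (rule length_le_image[where f = "\<lambda>A. (\<lambda>a. sc a x) ` A" and scB = sc])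
  have "0 \<in> (\<lambda>a. sc a x) ` ann sc {x}"
    unfolding ann_def by (rule rev_image_eqI[of 0]) simp_all
  then have "(\<lambda>a. sc a x) ` ann sc {x} = {0}"
    unfolding ann_def by auto
  then show "length_le sc ((\<lambda>a. sc a x) ` ann sc {x}) ((\<lambda>a. sc a x) ` UNIV) p"
    using assms by simp
next
  fix A :: "'a set" assume "submod (*) A"
  then show "submod sc ((\<lambda>a. sc a x) ` A)"
    by (rule submod_image) (simp_all add: M.scale_left_distrib)
next
  fix A B :: "'a set" assume AB: "submod (*) A" "submod (*) B" "ann sc {x} \<subseteq> A" "A \<subset> B"
  show "(\<lambda>a. sc a x) ` A \<subset> (\<lambda>a. sc a x) ` B"
  proof
    show "(\<lambda>a. sc a x) ` A \<subseteq> (\<lambda>a. sc a x) ` B"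
      using AB(4) by blast
    show "(\<lambda>a. sc a x) ` A \<noteq> (\<lambda>a. sc a x) ` B"
    proof
      assume eq: "(\<lambda>a. sc a x) ` A = (\<lambda>a. sc a x) ` B"
      obtain b where b: "b \<in> B" "b \<notin> A"
        using AB(4) by blast
      then obtain a where a: "a \<in> A" "sc b x = sc a x"
        using eq by (metis imageE imageI)
      then have "b - a \<in> A"
        using AB(3) unfolding ann_def by (auto simp: M.scale_left_diff_distrib)
      from submod_add[OF AB(1) this a(1)] show False
        using b(2) by simp
    qed
  qed
qed

definition restrict_m :: "'e \<Rightarrow> 'a \<Rightarrow> 'e"
  where "restrict_m z = (\<lambda>a. if a \<in> m then sc a z else 0)"

lemma restrict_m_hom_quot:
  assumes "\<And>a. a \<in> m \<Longrightarrow> sc a z \<in> X" "\<And>a. sc a x = 0 \<Longrightarrow> sc a z = 0"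
  shows "restrict_m z \<in> hom_quot sc X (ann sc {x}) m"
  using assms ideal_add[OF m_is_ideal] ideal_mult_left[OF m_is_ideal]
  unfolding hom_quot_def restrict_m_def ann_def by (auto simp: M.scale_left_distrib)

text \<open>Every map \<open>m / ann x \<rightarrow> R x\<close> is multiplication by an element of \<open>R x\<close>; otherwise
  \<open>R x\<close> would be shorter than \<open>R / ann x\<close>, since the kernel of \<open>restrict_m\<close> lies in the
  simple socle.\<close>

lemma hom_quot_cyclic_eq_restrict_m:
  assumes \<phi>: "\<phi> \<in> hom_quot sc (range (\<lambda>r. sc r x)) (ann sc {x}) m"
  shows "\<phi> \<in> restrict_m ` range (\<lambda>r. sc r x)"
proof (cases "x = 0")
  case True
  then have "\<phi> = 0"
    using \<phi> unfolding hom_quot_def by (auto simp: fun_eq_iff)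
  moreover have "restrict_m 0 = 0"
    unfolding restrict_m_def by (simp add: fun_eq_iff)
  ultimately show ?thesis
    using True by (metis M.scale_zero_right rangeI image_eqI)
next
  case False
  let ?X = "range (\<lambda>r. sc r x)"
  let ?J = "ann sc {x}"
  have sX: "submod sc ?X"
    by (rule submod_cyclic[OF module])
  have mF: "module (scale_fun sc)"
    by (rule module_scale_fun[OF module])
  have J: "is_ideal ?J"
    by (rule is_ideal_ann[OF module])
  have "1 \<notin> ?J"
    using False unfolding ann_def by simp
  then have Jm: "?J \<subseteq> m"
    by (rule local_ring_proper_ideal_subset[OF local J])
  obtain K where "ideal_pow m K \<subseteq> ?J"
    using ideal_pow_m_subset_ann by blast
  moreover obtain p where "length_le (*) (ideal_pow m K) UNIV p"
    using length_le_ideal_pow[OF local noetherian] by blast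
  ultimately have "length_le (*) ?J UNIV p"
    using length_le_subinterval is_ideal_ideal_pow is_ideal_iff_submod is_ideal_UNIV by blast
  then obtain c where c: "strict_chain (*) ?J UNIV (chain_length (*) ?J UNIV) c"
    and len: "length_le (*) ?J UNIV (chain_length (*) ?J UNIV)"
    using chain_length_maximal J is_ideal_UNIV is_ideal_iff_submod by blast
  define n where "n = chain_length (*) ?J UNIV"
  have "m \<subset> UNIV"
    using local_ring_one_notin[OF local] by blast
  then have "length_le (*) ?J m (n - 1)"
    using length_le_shrink_right[OF len] is_ideal_UNIV is_ideal_iff_submod n_def by blast
  then have hom_len: "length_le (scale_fun sc) {0} (hom_quot sc ?X ?J m) (n - 1)"
    by (rule length_le_hom_quot[OF sX _ J m_is_ideal Jm])
  have "?J \<subset> UNIV"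
    using \<open>1 \<notin> ?J\<close> by blast
  then have n1: "1 \<le> n"
    using length_le_Suc_left[OF len _ _ strict_chain_refl] J is_ideal_UNIV is_ideal_iff_submod n_def
    by fastforce
  have image: "restrict_m ` ?X \<subseteq> hom_quot sc ?X ?J m"
  proof
    fix \<psi> assume "\<psi> \<in> restrict_m ` ?X"
    then obtain r where r: "\<psi> = restrict_m (sc r x)"
      by blast
    have "sc a (sc r x) \<in> ?X" for a
      by (rule submod_scale[OF sX rangeI])
    moreover have "sc a (sc r x) = 0" if "sc a x = 0" for a
      using that by (metis M.scale_scale M.scale_zero_right mult.commute)
    ultimately show "\<psi> \<in> hom_quot sc ?X ?J m"
      unfolding r by (intro restrict_m_hom_quot)
  qed
  have add: "restrict_m (z + w) = restrict_m z + restrict_m w" for z w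
    unfolding restrict_m_def by (simp add: fun_eq_iff M.scale_right_distrib)
  have scale: "restrict_m (sc r z) = scale_fun sc r (restrict_m z)" for r z
    unfolding restrict_m_def scale_fun_def by (simp add: fun_eq_iff mult.commute)
  show ?thesis
  proof (rule ccontr)
    assume "\<phi> \<notin> restrict_m ` ?X"
    then have strict: "restrict_m ` ?X \<subset> hom_quot sc ?X ?J m"
      using image \<phi> by blast
    have sR: "submod (scale_fun sc) (restrict_m ` ?X)"
      using submod_image[OF sX] add scale by blast
    have s0: "submod (scale_fun sc) {0 :: 'a \<Rightarrow> 'e}"
      by (rule submod_zero_set[OF mF])
    have "length_le (scale_fun sc) {0} (restrict_m ` ?X) (n - 1)"
      using length_le_subinterval[OF hom_len s0 submod_hom_quot[OF module sX], of "{0}"] image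
      by blast
    then obtain d where d: "strict_chain (scale_fun sc) {0} (restrict_m ` ?X)
        (chain_length (scale_fun sc) {0} (restrict_m ` ?X)) d"
      and image_len: "length_le (scale_fun sc) {0} (restrict_m ` ?X)
        (chain_length (scale_fun sc) {0} (restrict_m ` ?X))"
      using chain_length_maximal[OF _ s0 sR] submod_zero[OF sR] by blast
    define k where "k = chain_length (scale_fun sc) {0} (restrict_m ` ?X)"
    have "Suc k \<le> n - 1"
      using length_le_Suc_right[OF hom_len submod_hom_quot[OF module sX] strict d] k_def by simp
    have "length_le sc {0} {z \<in> ?X. restrict_m z = 0} 1"
    proof (rule length_le_one)
      fix Y assume Y: "submod sc Y" "{0} \<subset> Y" "Y \<subseteq> {z \<in> ?X. restrict_m z = 0}"
      have "u \<in> Y"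
        using u_mem_submod[OF Y(1)] Y(2) by blast
      have "z \<in> Y" if z: "z \<in> ?X" "restrict_m z = 0" for z
      proof -
        have "sc a z = 0" if "a \<in> m" for a
          using z(2) that unfolding restrict_m_def by (metis (mono_tags) zero_fun_def)
        then obtain t where "z = sc t u"
          by (rule socle_eq)
        then show ?thesis
          using submod_scale[OF Y(1) \<open>u \<in> Y\<close>] by simp
      qed
      then show "Y = {z \<in> ?X. restrict_m z = 0}"
        using Y(3) by blast
    qed
    then have "length_le sc {0} ?X (1 + k)"
      using length_le_kernel_image[OF module mF sX] add scale image_len k_def by blast
    then have "n \<le> 1 + k"
      using length_le_cyclic c n_def unfolding length_le_def by blast
    then show False
      using \<open>Suc k \<le> n - 1\<close> n1 by simp
  qed
qed

lemma annE_ann_singleton: "annE sc (ann sc {x}) = range (\<lambda>s. sc s x)"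
proof
  show "range (\<lambda>s. sc s x) \<subseteq> annE sc (ann sc {x})"
    unfolding annE_def ann_def by (auto simp del: M.scale_scale)
      (metis M.scale_scale M.scale_zero_right mult.commute)
next
  let ?X = "range (\<lambda>s. sc s x)"
  have sX: "submod sc ?X"
    by (rule submod_cyclic[OF module])
  show "annE sc (ann sc {x}) \<subseteq> ?X"
  proof (cases "x = 0")
    case True
    then have "annE sc (ann sc {x}) = {0}"
      unfolding annE_def ann_def by (auto intro: M.scale_one[symmetric, THEN trans])
    then show ?thesis
      using submod_zero[OF sX] by simp
  next
    case False
    then have "u \<in> ?X"
      using u_mem_submod[OF sX] M.scale_one by (metis rangeI singletonD subsetI subset_singletonD)
    have "\<forall>y. y \<in> annE sc (ann sc {x}) \<longrightarrow> ideal_pow m k \<subseteq> ann sc {y} \<longrightarrow> y \<in> ?X" for k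
    proof (induction k)
      case 0
      show ?case
      proof (intro allI impI)
        fix y assume "ideal_pow m 0 \<subseteq> ann sc {y}"
        then have "sc 1 y = 0"
          using ideal_pow_0 unfolding ann_def by blast
        then have "y = sc 0 x"
          by simp
        then show "y \<in> ?X"
          by blast
      qed
    next
      case (Suc k)
      show ?case
      proof (intro allI impI)
        fix y assume y: "y \<in> annE sc (ann sc {x})" and pow: "ideal_pow m (Suc k) \<subseteq> ann sc {y}"
        have "sc a y \<in> ?X" if a: "a \<in> m" for a
        proof -
          have "sc a y \<in> annE sc (ann sc {x})"
            using y unfolding annE_def ann_def
            by (simp del: M.scale_scale) (metis M.scale_scale M.scale_zero_right mult.commute)
          moreover have "ideal_pow m k \<subseteq> ann sc {sc a y}"
            using pow ideal_pow_Suc_mult[OF a] unfolding ann_def by (auto simp: mult.commute)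
          ultimately show ?thesis
            using Suc.IH by blast
        qed
        moreover have "sc a y = 0" if "sc a x = 0" for a
          using y that unfolding annE_def ann_def by simp
        ultimately have "restrict_m y \<in> hom_quot sc ?X (ann sc {x}) m"
          by (rule restrict_m_hom_quot)
        then obtain z where z: "z \<in> ?X" "restrict_m y = restrict_m z"
          using hom_quot_cyclic_eq_restrict_m by blast
        have "sc a (y - z) = 0" if "a \<in> m" for a
          using fun_cong[OF z(2), of a] that unfolding restrict_m_def
          by (simp add: M.scale_right_diff_distrib)
        then obtain t where "y - z = sc t u"
          by (rule socle_eq)
        then have "y = z + sc t u"
          by (simp add: algebra_simps)
        then show "y \<in> ?X"
          using submod_add[OF sX z(1) submod_scale[OF sX \<open>u \<in> ?X\<close>]] by simp
      qed
    qed
    then show ?thesis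
      using ideal_pow_m_subset_ann by blast
  qed
qed

lemma annE_ann_finite: "finite S \<Longrightarrow> annE sc (ann sc S) = M.span S"
proof (induction S rule: finite_induct)
  case empty
  have "annE sc UNIV = {0}"
    unfolding annE_def by (auto intro: M.scale_one[symmetric, THEN trans])
  then show ?case
    unfolding ann_def by simp
next
  case (insert x S)
  have "ann sc (insert x S) = ann sc S \<inter> ann sc {x}"
    unfolding ann_def by blast
  then have "annE sc (ann sc (insert x S)) = annE sc (ann sc S) + annE sc (ann sc {x})"
    using annE_Int is_ideal_ann[OF module] by simp
  also have "\<dots> = M.span S + M.span {x}"
    using insert.IH annE_ann_singleton M.span_singleton by simp
  also have "\<dots> = M.span (insert x S)"
    using M.span_Un[of S "{x}"] by (auto simp: set_plus_def)
  finally show ?case .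
qed

definition separators :: "'e set \<Rightarrow> 'e \<Rightarrow> 'a set"
  where "separators S e = {r \<in> ann sc S. sc r e = u}"

lemma separators_antimono: "S \<subseteq> S' \<Longrightarrow> separators S' e \<subseteq> separators S e"
  unfolding separators_def ann_def by blast

lemma separators_coset:
  assumes "r0 \<in> separators S e"
  shows "separators S e = r0 +o ann sc (insert e S)"
proof
  show "separators S e \<subseteq> r0 +o ann sc (insert e S)"
  proof
    fix r assume "r \<in> separators S e"
    then have "r - r0 \<in> ann sc (insert e S)"
      using assms unfolding separators_def ann_def by (simp add: M.scale_left_diff_distrib)
    then show "r \<in> r0 +o ann sc (insert e S)"
      by (simp add: set_minus_plus[symmetric])
  qed
  show "r0 +o ann sc (insert e S) \<subseteq> separators S e"
    using assms unfolding separators_def ann_def elt_set_plus_def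
    by (auto simp: M.scale_left_distrib)
qed

lemma separators_nonempty:
  assumes M: "submod sc M" and e: "e \<notin> M" and S: "finite S" "S \<subseteq> M"
  shows "separators S e \<noteq> {}"
proof -
  have "M.span S \<subseteq> M"
    using M.span_minimal[OF S(2)] M submod_iff_subspace[OF module] by blast
  then have "e \<notin> annE sc (ann sc S)"
    using e annE_ann_finite[OF S(1)] by blast
  then obtain r where r: "r \<in> ann sc S" "sc r e \<noteq> 0"
    unfolding annE_def by blast
  then obtain s where "sc s (sc r e) = u"
    by (metis exists_scale_eq_u)
  moreover have "s * r \<in> ann sc S"
    using ideal_mult_left[OF is_ideal_ann[OF module] r(1)] .
  ultimately show ?thesis
    unfolding separators_def by auto
qed

text \<open>Stabilisation comes from the finite length of \<open>R / m\<^sup>n\<close>: the ideals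
  \<open>ann (insert e S) + m\<^sup>n\<close> decrease as \<open>S\<close> grows.\<close>

lemma separators_stabilize:
  assumes M: "submod sc M" and e: "e \<notin> M"
  obtains T where "\<And>n. finite (T n)" "\<And>n. T n \<subseteq> M" "\<And>n n'. n \<le> n' \<Longrightarrow> T n \<subseteq> T n'"
    "\<And>n S. finite S \<Longrightarrow> T n \<subseteq> S \<Longrightarrow> S \<subseteq> M \<Longrightarrow>
      separators S e + ideal_pow m n = separators (T n) e + ideal_pow m n"
proof -
  define D where "D n S = ann sc (insert e S) + ideal_pow m n" for n S
  have D: "submod (*) (D n S) \<and> ideal_pow m n \<subseteq> D n S \<and> D n S \<subseteq> UNIV" for n S
  proof -
    have "is_ideal (D n S)"
      unfolding D_def by (rule is_ideal_set_plus[OF is_ideal_ann[OF module] is_ideal_ideal_pow])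
    moreover have "ideal_pow m n \<subseteq> D n S"
      unfolding D_def by (rule set_zero_plus2[OF ideal_zero[OF is_ideal_ann[OF module]]])
    ultimately show ?thesis
      using is_ideal_iff_submod by blast
  qed
  have D_anti: "D n S' \<subseteq> D n S" if "S \<subseteq> S'" for n S S'
    unfolding D_def using that by (intro set_plus_mono2 ann_antimono) auto
  have "\<forall>n. \<exists>S0. (finite S0 \<and> S0 \<subseteq> M) \<and>
      (\<forall>S. finite S \<and> S \<subseteq> M \<longrightarrow> S0 \<subseteq> S \<longrightarrow> D n S = D n S0)"
  proof
    fix n
    obtain p where p: "length_le (*) (ideal_pow m n) UNIV p"
      using length_le_ideal_pow[OF local noetherian] by blast
    have Q: "submod (*) (ideal_pow m n)" and V: "submod (*) (UNIV :: 'a set)"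
      using is_ideal_ideal_pow is_ideal_UNIV is_ideal_iff_submod by blast+
    have h1: "\<And>S. finite S \<and> S \<subseteq> M \<Longrightarrow>
        submod (*) (D n S) \<and> ideal_pow m n \<subseteq> D n S \<and> D n S \<subseteq> UNIV"
      using D by blast
    have h2: "\<And>S S'. finite S \<and> S \<subseteq> M \<Longrightarrow> finite S' \<and> S' \<subseteq> M \<Longrightarrow> S \<subseteq> S' \<Longrightarrow>
        D n S' \<subseteq> D n S"
      using D_anti by blast
    have h3: "finite {} \<and> {} \<subseteq> M"
      by simp
    show "\<exists>S0. (finite S0 \<and> S0 \<subseteq> M) \<and>
        (\<forall>S. finite S \<and> S \<subseteq> M \<longrightarrow> S0 \<subseteq> S \<longrightarrow> D n S = D n S0)"
      using antitone_length_le_stabilizes[where P = "\<lambda>S. finite S \<and> S \<subseteq> M" and D = "D n",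
          OF p Q V h1 h2 h3] .
  qed
  from choice[OF this] obtain S0 where S0_prop: "\<forall>n. (finite (S0 n) \<and> S0 n \<subseteq> M) \<and>
      (\<forall>S. finite S \<and> S \<subseteq> M \<longrightarrow> S0 n \<subseteq> S \<longrightarrow> D n S = D n (S0 n))"
    by (elim exE)
  have S0: "finite (S0 n)" "S0 n \<subseteq> M" for n
    using S0_prop by simp_all
  have S0_stable: "D n S = D n (S0 n)" if "finite S" "S \<subseteq> M" "S0 n \<subseteq> S" for n S
    using S0_prop that by blast
  define T where "T n = (\<Union>i\<le>n. S0 i)" for n
  have T_fin: "finite (T n)" and T_sub: "T n \<subseteq> M" and S0_T: "S0 n \<subseteq> T n" for n
    unfolding T_def using S0 by auto
  have T_mono: "T n \<subseteq> T n'" if "n \<le> n'" for n n'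
    unfolding T_def using that by (intro UN_mono) auto
  have "separators S e + ideal_pow m n = separators (T n) e + ideal_pow m n"
    if S: "finite S" "T n \<subseteq> S" "S \<subseteq> M" for n S
  proof -
    obtain r0 where r0: "r0 \<in> separators S e"
      using separators_nonempty[OF M e S(1,3)] by blast
    then have r0': "r0 \<in> separators (T n) e"
      using separators_antimono[OF S(2)] by blast
    have "S0 n \<subseteq> S"
      using S0_T S(2) by blast
    then have "D n S = D n (T n)"
      using S0_stable[OF S(1,3)] S0_stable[OF T_fin T_sub S0_T] by simp
    then show ?thesis
      using separators_coset[OF r0] separators_coset[OF r0'] unfolding D_def
      by (simp add: set_plus_rearrange3)
  qed
  from that[OF T_fin T_sub T_mono this] show ?thesis .
qed

end

locale complete_injective_hull = injective_hull +
  assumes complete: "madic_complete m"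
begin

text \<open>The separators of the sets \<open>T n\<close> form a compatible system modulo the powers \<open>m\<^sup>n\<close>;
  its \<open>m\<close>-adic limit still kills each \<open>z \<in> M\<close> and sends \<open>e\<close> to \<open>u\<close>, because a power of
  \<open>m\<close> kills both \<open>z\<close> and \<open>e\<close>.\<close>

lemma exists_separator:
  assumes M: "submod sc M" and e: "e \<notin> M"
  obtains y where "y \<in> ann sc M" "sc y e = u"
proof -
  obtain T where T: "\<And>n. finite (T n)" "\<And>n. T n \<subseteq> M" "\<And>n n'. n \<le> n' \<Longrightarrow> T n \<subseteq> T n'"
    "\<And>n S. finite S \<Longrightarrow> T n \<subseteq> S \<Longrightarrow> S \<subseteq> M \<Longrightarrow>
      separators S e + ideal_pow m n = separators (T n) e + ideal_pow m n"
    using separators_stabilize[OF M e] by blast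
  define \<Gamma> where "\<Gamma> n = separators (T n) e + ideal_pow m n" for n
  have "\<exists>r\<in>\<Gamma> (Suc n). r - w \<in> ideal_pow m n" if "w \<in> \<Gamma> n" for n w
  proof -
    have "w \<in> separators (T (Suc n)) e + ideal_pow m n"
      using that T(4)[OF T(1) T(3) T(2), of n "Suc n"] unfolding \<Gamma>_def by simp
    then obtain c q where cq: "w = c + q" "c \<in> separators (T (Suc n)) e" "q \<in> ideal_pow m n"
      by (rule set_plus_elim)
    have "c + 0 \<in> \<Gamma> (Suc n)"
      unfolding \<Gamma>_def by (rule set_plus_intro[OF cq(2) ideal_zero[OF is_ideal_ideal_pow]])
    moreover have "c - w \<in> ideal_pow m n"
      using cq(1) ideal_uminus[OF is_ideal_ideal_pow cq(3)] by simp
    ultimately show ?thesis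
      by auto
  qed
  moreover have "\<Gamma> 0 \<noteq> {}"
    using separators_nonempty[OF M e T(1,2)] set_plus_intro[OF _ ideal_zero[OF is_ideal_ideal_pow]]
    unfolding \<Gamma>_def by blast
  ultimately obtain x y where x: "\<And>n. x n \<in> \<Gamma> n"
    and lim: "\<And>k. \<exists>N. \<forall>n\<ge>N. x n - y \<in> ideal_pow m k"
    using madic_limit[OF m_is_ideal complete] by metis
  have "sc y z = 0 \<and> sc y e = u" if z: "z \<in> M" for z
  proof -
    obtain Kz Ke where K: "ideal_pow m Kz \<subseteq> ann sc {z}" "ideal_pow m Ke \<subseteq> ann sc {e}"
      using ideal_pow_m_subset_ann by metis
    define K where "K = max Kz Ke"
    obtain N where N: "\<forall>n\<ge>N. x n - y \<in> ideal_pow m K"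
      using lim by blast
    define n where "n = max N K"
    have "x n \<in> separators (insert z (T n)) e + ideal_pow m n"
      using x[of n] T(4)[of "insert z (T n)" n] T(1,2) z unfolding \<Gamma>_def by auto
    then obtain c q where cq: "x n = c + q" "c \<in> separators (insert z (T n)) e" "q \<in> ideal_pow m n"
      by (rule set_plus_elim)
    define q' where "q' = q - (x n - y)"
    have "q \<in> ideal_pow m K" "x n - y \<in> ideal_pow m K"
      using ideal_pow_antimono[OF m_is_ideal, of K n] cq(3) N by (auto simp: n_def)
    then have "q' \<in> ideal_pow m K"
      unfolding q'_def by (rule ideal_diff[OF is_ideal_ideal_pow])
    then have "q' \<in> ann sc {z} \<inter> ann sc {e}"
      using K ideal_pow_antimono[OF m_is_ideal, of Kz K] ideal_pow_antimono[OF m_is_ideal, of Ke K]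
      unfolding K_def by auto
    moreover have "y = c + q'"
      unfolding q'_def using cq(1) by (simp add: algebra_simps)
    ultimately show ?thesis
      using cq(2) unfolding separators_def ann_def by (simp add: M.scale_left_distrib)
  qed
  then show ?thesis
    using that submod_zero[OF M] unfolding ann_def by blast
qed

theorem annE_ann_submod:
  assumes M: "submod sc M"
  shows "annE sc (ann sc M) = M"
proof
  show "M \<subseteq> annE sc (ann sc M)"
    by (rule annE_ann_superset)
  show "annE sc (ann sc M) \<subseteq> M"
  proof
    fix e assume e: "e \<in> annE sc (ann sc M)"
    show "e \<in> M"
    proof (rule ccontr)
      assume "e \<notin> M"
      then obtain y where "y \<in> ann sc M" "sc y e = u"
        using exists_separator[OF M] by blast
      then show False
        using e u_nonzero unfolding annE_def by simp
    qed
  qed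
qed

end

section \<open>Graded ideals of the skew polynomial ring\<close>

lemma skew_elt_bounded: "skew_elt f \<Longrightarrow> \<exists>N. \<forall>i>N. f i = 0"
  unfolding skew_elt_def
  by (metis (mono_tags) finite_nat_set_iff_bounded_le le_less_linear mem_Collect_eq not_le)

lemma skew_elt_if_bounded: "(\<And>i. N < i \<Longrightarrow> f i = 0) \<Longrightarrow> skew_elt f"
  unfolding skew_elt_def by (rule finite_subset[of _ "{..N}"]) (auto simp: not_le[symmetric])

lemma skew_elt_monomial: "skew_elt (\<lambda>j. if j = i then s else 0)"
  by (rule skew_elt_if_bounded[of i]) simp

lemma skew_elt_skew_mult:
  assumes p: "0 < p" and f: "skew_elt f" and g: "skew_elt g"
  shows "skew_elt (skew_mult p f g)"
proof -
  obtain N1 N2 where N1: "\<forall>i>N1. f i = 0" and N2: "\<forall>i>N2. g i = 0"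
    using skew_elt_bounded[OF f] skew_elt_bounded[OF g] by blast
  have "skew_mult p f g n = 0" if n: "N1 + N2 < n" for n
  proof -
    have "f i * g (n - i) ^ (p ^ i) = 0" if "i \<le> n" for i
    proof (cases "N1 < i")
      case False
      then have "g (n - i) = 0"
        using N2 n that by simp
      then show ?thesis
        using p by (simp add: zero_power)
    qed (use N1 in simp)
    then show ?thesis
      unfolding skew_mult_def by simp
  qed
  then show ?thesis
    by (rule skew_elt_if_bounded)
qed

lemma graded_two_sided_ideal_ext_ideal:
  assumes p: "0 < p" and J: "is_ideal J"
  shows "graded_two_sided_ideal p (ext_ideal J)"
  unfolding graded_two_sided_ideal_def
proof
  show "\<exists>K. (\<forall>i. is_ideal (K i)) \<and> ext_ideal J = {f. skew_elt f \<and> (\<forall>i. f i \<in> K i)}"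
    using J unfolding ext_ideal_def by (intro exI[of _ "\<lambda>_. J"]) simp
  show "skew_two_sided_ideal p (ext_ideal J)"
    unfolding skew_two_sided_ideal_def
  proof (intro conjI ballI allI impI)
    show "(\<lambda>_. 0) \<in> ext_ideal J"
      unfolding ext_ideal_def skew_elt_def using ideal_zero[OF J] by simp
  next
    fix f g assume f: "f \<in> ext_ideal J" and g: "g \<in> ext_ideal J"
    have "{i. f i + g i \<noteq> 0} \<subseteq> {i. f i \<noteq> 0} \<union> {i. g i \<noteq> 0}"
      by auto
    moreover have "finite ({i. f i \<noteq> 0} \<union> {i. g i \<noteq> 0})"
      using f g unfolding ext_ideal_def skew_elt_def by simp
    ultimately have "skew_elt (\<lambda>i. f i + g i)"
      unfolding skew_elt_def by (rule finite_subset)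
    then show "(\<lambda>i. f i + g i) \<in> ext_ideal J"
      using f g ideal_add[OF J] unfolding ext_ideal_def by simp
  next
    fix f g :: "nat \<Rightarrow> 'a" assume f: "f \<in> ext_ideal J" and g: "skew_elt g"
    have fJ: "skew_elt f" "\<And>i. f i \<in> J"
      using f unfolding ext_ideal_def by auto
    have pow: "f i ^ (p ^ k) \<in> J" for i k
    proof -
      have "f i ^ (p ^ k) = f i ^ (p ^ k - 1) * f i"
        using p by (simp flip: power_Suc2)
      then show ?thesis
        using ideal_mult_left[OF J fJ(2)[of i]] by simp
    qed
    have "skew_mult p g f n \<in> J" for n
      unfolding skew_mult_def by (rule ideal_sum[OF J]) (rule ideal_mult_left[OF J pow])
    moreover have "skew_mult p f g n \<in> J" for n
      unfolding skew_mult_def by (rule ideal_sum[OF J]) (rule ideal_mult_right[OF J fJ(2)])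
    ultimately show "skew_mult p g f \<in> ext_ideal J" "skew_mult p f g \<in> ext_ideal J"
      unfolding ext_ideal_def using skew_elt_skew_mult[OF p] fJ(1) g by simp_all
  next
    fix f assume "f \<in> ext_ideal J"
    then show "skew_elt f"
      unfolding ext_ideal_def by simp
  qed
qed

lemma ext_ideal_eq_iff:
  assumes "0 \<in> J" "0 \<in> J'"
  shows "ext_ideal J = ext_ideal J' \<longleftrightarrow> J = J'"
proof
  assume eq: "ext_ideal J = ext_ideal J'"
  have "s \<in> J \<longleftrightarrow> (\<lambda>j. if j = 0 then s else 0) \<in> ext_ideal J" if "0 \<in> J" for s J
    using skew_elt_monomial[of 0 s] that unfolding ext_ideal_def by auto
  note mono = this
  show "J = J'"
  proof (rule set_eqI)
    fix s
    have "s \<in> J \<longleftrightarrow> (\<lambda>j. if j = 0 then s else 0) \<in> ext_ideal J"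
      by (rule mono[OF assms(1)])
    also have "\<dots> \<longleftrightarrow> s \<in> J'"
      unfolding eq by (rule mono[OF assms(2), symmetric])
    finally show "s \<in> J \<longleftrightarrow> s \<in> J'" .
  qed
qed simp

section \<open>Frobenius actions on \<open>E\<^sub>S\<close>\<close>

locale frobenius_action =
  fixes p :: nat and \<pi> :: "'a::comm_ring_1 \<Rightarrow> 's::comm_ring_1" and sc :: "'a \<Rightarrow> 'e::ab_group_add \<Rightarrow> 'e"
    and I :: "'a set" and T :: "'e \<Rightarrow> 'e"
  assumes module: "module sc" and quotient: "quotient_map \<pi> I"
    and frobenius: "frob_structure p sc I T" and p_pos: "0 < p"
begin

sublocale M: module sc
  by (rule module)

lemma \<pi>_add: "\<pi> (a + b) = \<pi> a + \<pi> b"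
  using quotient unfolding quotient_map_def by blast

lemma \<pi>_mult: "\<pi> (a * b) = \<pi> a * \<pi> b"
  using quotient unfolding quotient_map_def by blast

lemma \<pi>_zero: "\<pi> 0 = 0"
  using \<pi>_add[of 0 0] by simp

lemma \<pi>_diff: "\<pi> (a - b) = \<pi> a - \<pi> b"
  using \<pi>_add[of "a - b" b] by (simp add: algebra_simps)

lemma \<pi>_surj: "\<exists>r. \<pi> r = s"
  using quotient unfolding quotient_map_def by (metis surjD)

lemma is_ideal_\<pi>_image:
  assumes J: "is_ideal J"
  shows "is_ideal (\<pi> ` J)"
  unfolding is_ideal_def
proof (intro conjI ballI allI impI)
  show "0 \<in> \<pi> ` J"
    using ideal_zero[OF J] \<pi>_zero by (metis image_eqI)
next
  fix x y assume "x \<in> \<pi> ` J" "y \<in> \<pi> ` J"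
  then obtain a b where "x = \<pi> a" "y = \<pi> b" "a \<in> J" "b \<in> J"
    by blast
  then show "x + y \<in> \<pi> ` J"
    using \<pi>_add[of a b] ideal_add[OF J] by (metis image_eqI)
next
  fix s x assume "x \<in> \<pi> ` J"
  then obtain a where "x = \<pi> a" "a \<in> J"
    by blast
  moreover obtain r where "\<pi> r = s"
    using \<pi>_surj by blast
  ultimately show "s * x \<in> \<pi> ` J"
    using \<pi>_mult[of r a] ideal_mult_left[OF J] by (metis image_eqI)
qed

lemma \<pi>_eq_0_iff: "\<pi> r = 0 \<longleftrightarrow> r \<in> I"
  using quotient unfolding quotient_map_def by blast

lemma \<pi>_eq_iff: "\<pi> r = \<pi> r' \<longleftrightarrow> r - r' \<in> I"
  using \<pi>_diff[of r r'] \<pi>_eq_0_iff[of "r - r'"] by simp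

lemma sactS_\<pi>:
  assumes e: "e \<in> ES sc I"
  shows "sactS \<pi> sc (\<pi> r) e = sc r e"
proof -
  have "\<pi> (SOME r'. \<pi> r' = \<pi> r) = \<pi> r"
    by (rule someI_ex) blast
  then have "sc (SOME r'. \<pi> r' = \<pi> r) e - sc r e = 0"
    using e unfolding \<pi>_eq_iff ES_def annE_def by (simp flip: M.scale_left_diff_distrib)
  then show ?thesis
    unfolding sactS_def by simp
qed

lemma T_pow_ES: "e \<in> ES sc I \<Longrightarrow> (T ^^ i) e \<in> ES sc I"
  using frobenius unfolding frob_structure_def by (induction i) auto

lemma T_pow_scale:
  assumes e: "e \<in> ES sc I"
  shows "(T ^^ i) (sc r e) = sc (r ^ (p ^ i)) ((T ^^ i) e)"
proof (induction i)
  case (Suc i)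
  have "(T ^^ Suc i) (sc r e) = T (sc (r ^ (p ^ i)) ((T ^^ i) e))"
    using Suc by simp
  also have "\<dots> = sc ((r ^ (p ^ i)) ^ p) ((T ^^ Suc i) e)"
    using frobenius T_pow_ES[OF e] unfolding frob_structure_def by simp
  finally show ?case
    by (simp add: power_mult[symmetric] mult.commute)
qed simp

lemma T_pow_eq_0:
  assumes "T_torsion_free sc I T" "e \<in> ES sc I" "(T ^^ i) e = 0"
  shows "e = 0"
  using assms(2,3)
proof (induction i arbitrary: e)
  case (Suc i)
  then have "T ((T ^^ i) e) = 0"
    by (simp add: funpow_swap1)
  then have "(T ^^ i) e = 0"
    using assms(1) T_pow_ES[OF Suc.prems(1)] unfolding T_torsion_free_def by blast
  then show ?case
    using Suc by blast
qed simp

lemma skew_submod_T_pow: "skew_submod sc I T M \<Longrightarrow> e \<in> M \<Longrightarrow> (T ^^ i) e \<in> M"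
  unfolding skew_submod_def by (induction i) auto

text \<open>If \<open>r\<close> kills \<open>T\<^sup>i M\<close>, then \<open>T\<^sup>i (r e) = r\<^bsup>p\<^sup>i\<^esup> T\<^sup>i e = 0\<close>, so \<open>r e = 0\<close>
  by torsion-freeness.\<close>

lemma ann_T_pow_image:
  assumes tf: "T_torsion_free sc I T" and M: "skew_submod sc I T M"
  shows "ann sc ((T ^^ i) ` M) = ann sc M"
proof
  show "ann sc M \<subseteq> ann sc ((T ^^ i) ` M)"
    using skew_submod_T_pow[OF M] unfolding ann_def by blast
  show "ann sc ((T ^^ i) ` M) \<subseteq> ann sc M"
  proof
    fix r assume r: "r \<in> ann sc ((T ^^ i) ` M)"
    have "sc r e = 0" if e: "e \<in> M" for e
    proof -
      have eES: "e \<in> ES sc I"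
        using M e unfolding skew_submod_def by blast
      have "r ^ (p ^ i) = r ^ (p ^ i - 1) * r"
        using p_pos by (simp flip: power_Suc2)
      then have "(T ^^ i) (sc r e) = 0"
        using r e T_pow_scale[OF eES] unfolding ann_def by (simp flip: M.scale_scale)
      moreover have "sc r e \<in> ES sc I"
        using submod_scale[OF submod_annE[OF module] eES[unfolded ES_def]] unfolding ES_def .
      ultimately show ?thesis
        using T_pow_eq_0[OF tf] by blast
    qed
    then show "r \<in> ann sc M"
      unfolding ann_def by blast
  qed
qed

lemma ann_contains_I: "M \<subseteq> ES sc I \<Longrightarrow> I \<subseteq> ann sc M"
  unfolding ES_def annE_def ann_def by blast

lemma ext_ideal_subset_skew_ann:
  assumes M: "skew_submod sc I T M"
  shows "ext_ideal (\<pi> ` ann sc M) \<subseteq> skew_ann \<pi> sc T M"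
proof
  fix f assume f: "f \<in> ext_ideal (\<pi> ` ann sc M)"
  have "sactS \<pi> sc (f i) ((T ^^ i) e) = 0" if e: "e \<in> M" for e i
  proof -
    obtain r where r: "r \<in> ann sc M" "f i = \<pi> r"
      using f unfolding ext_ideal_def by blast
    have "(T ^^ i) e \<in> M"
      by (rule skew_submod_T_pow[OF M e])
    then show ?thesis
      using r M sactS_\<pi> unfolding ann_def skew_submod_def by auto
  qed
  then show "f \<in> skew_ann \<pi> sc T M"
    using f unfolding skew_ann_def skew_act_def ext_ideal_def by simp
qed

lemma graded_subset_ext_ideal:
  assumes tf: "T_torsion_free sc I T" and M: "skew_submod sc I T M"
    and B: "graded_two_sided_ideal p B" "B \<subseteq> skew_ann \<pi> sc T M"
  shows "B \<subseteq> ext_ideal (\<pi> ` ann sc M)"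
proof
  fix f assume f: "f \<in> B"
  obtain K where K: "\<And>i. is_ideal (K i)" "B = {f. skew_elt f \<and> (\<forall>i. f i \<in> K i)}"
    using B(1) unfolding graded_two_sided_ideal_def by blast
  have "f i \<in> \<pi> ` ann sc M" for i
  proof -
    obtain r where r: "\<pi> r = f i"
      using \<pi>_surj by blast
    define g where "g j = (if j = i then f i else 0)" for j
    have "g \<in> B"
      using f K skew_elt_monomial ideal_zero unfolding g_def by auto
    then have "skew_act \<pi> sc T g e = 0" if "e \<in> M" for e
      using B(2) that unfolding skew_ann_def by blast
    moreover have "skew_act \<pi> sc T g e = sc r ((T ^^ i) e)" if "e \<in> M" for e
    proof -
      have "(T ^^ i) e \<in> ES sc I"
        using skew_submod_T_pow[OF M that] M unfolding skew_submod_def by blast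
      moreover have "{j. g j \<noteq> 0} \<subseteq> {i}"
        unfolding g_def by auto
      ultimately show ?thesis
        using sactS_\<pi>[of "(T ^^ i) e" 0] sactS_\<pi>[of "(T ^^ i) e" r] r \<pi>_zero
        unfolding skew_act_def g_def by (cases "f i = 0") (auto simp: subset_singleton_iff)
    qed
    ultimately have "r \<in> ann sc ((T ^^ i) ` M)"
      unfolding ann_def by auto
    then have "r \<in> ann sc M"
      using ann_T_pow_image[OF tf M] by simp
    then show ?thesis
      using r by (metis image_eqI)
  qed
  then show "f \<in> ext_ideal (\<pi> ` ann sc M)"
    using f K unfolding ext_ideal_def by blast
qed

lemma grAnn_eq_ext_ideal:
  assumes tf: "T_torsion_free sc I T" and M: "skew_submod sc I T M"
  shows "grAnn p \<pi> sc T M = ext_ideal (\<pi> ` ann sc M)"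
  unfolding grAnn_def
proof (rule the_equality)
  have "is_ideal (\<pi> ` ann sc M)"
    by (rule is_ideal_\<pi>_image[OF is_ideal_ann[OF module]])
  then show "graded_two_sided_ideal p (ext_ideal (\<pi> ` ann sc M)) \<and>
      ext_ideal (\<pi> ` ann sc M) \<subseteq> skew_ann \<pi> sc T M \<and>
      (\<forall>B. graded_two_sided_ideal p B \<and> B \<subseteq> skew_ann \<pi> sc T M \<longrightarrow> B \<subseteq> ext_ideal (\<pi> ` ann sc M))"
    using graded_two_sided_ideal_ext_ideal[OF p_pos] ext_ideal_subset_skew_ann[OF M]
      graded_subset_ext_ideal[OF tf M] by blast
next
  fix A assume A: "graded_two_sided_ideal p A \<and> A \<subseteq> skew_ann \<pi> sc T M \<and>
      (\<forall>B. graded_two_sided_ideal p B \<and> B \<subseteq> skew_ann \<pi> sc T M \<longrightarrow> B \<subseteq> A)"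
  have "A \<subseteq> ext_ideal (\<pi> ` ann sc M)"
    using graded_subset_ext_ideal[OF tf M] A by blast
  moreover have "ext_ideal (\<pi> ` ann sc M) \<subseteq> A"
    using A graded_two_sided_ideal_ext_ideal[OF p_pos is_ideal_\<pi>_image[OF is_ideal_ann[OF module]]]
      ext_ideal_subset_skew_ann[OF M] by blast
  ultimately show "A = ext_ideal (\<pi> ` ann sc M)"
    by blast
qed

lemma \<pi>_image_subset_imp_subset:
  assumes "\<pi> ` A \<subseteq> \<pi> ` B" "is_ideal B" "I \<subseteq> B"
  shows "A \<subseteq> B"
proof
  fix x assume "x \<in> A"
  then have "\<pi> x \<in> \<pi> ` B"
    using assms(1) by blast
  then obtain y where y: "y \<in> B" "\<pi> x = \<pi> y"
    by (metis imageE)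
  then have "x - y \<in> B"
    using assms(3) \<pi>_eq_iff by blast
  from ideal_add[OF assms(2) this y(1)] show "x \<in> B"
    by simp
qed

lemma \<pi>_image_eq_iff:
  assumes "is_ideal L" "is_ideal L'" "I \<subseteq> L" "I \<subseteq> L'"
  shows "\<pi> ` L = \<pi> ` L' \<longleftrightarrow> L = L'"
  using \<pi>_image_subset_imp_subset[of L L'] \<pi>_image_subset_imp_subset[of L' L] assms by auto

lemma ES_ideal_iff:
  assumes "is_ideal L" "I \<subseteq> L"
  shows "ES_ideal sc I T L \<longleftrightarrow> skew_submod sc I T (annE sc L)"
proof -
  have "annES sc I L = annE sc L"
    using assms(2) unfolding annES_def ES_def annE_def by blast
  then show ?thesis
    using assms unfolding ES_ideal_def by simp
qed

lemma ES_special_iff: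
  assumes tf: "T_torsion_free sc I T" and L: "is_ideal L" "I \<subseteq> L"
  shows "ES_special p \<pi> sc I T (\<pi> ` L) \<longleftrightarrow> (\<exists>M. skew_submod sc I T M \<and> ann sc M = L)"
proof -
  have "ext_ideal (\<pi> ` L) = grAnn p \<pi> sc T M \<longleftrightarrow> ann sc M = L" if M: "skew_submod sc I T M" for M
  proof -
    have "ext_ideal (\<pi> ` L) = grAnn p \<pi> sc T M \<longleftrightarrow> \<pi> ` L = \<pi> ` ann sc M"
      unfolding grAnn_eq_ext_ideal[OF tf M]
      by (intro ext_ideal_eq_iff ideal_zero is_ideal_\<pi>_image L is_ideal_ann[OF module])
    also have "\<dots> \<longleftrightarrow> ann sc M = L"
      using \<pi>_image_eq_iff[OF L(1) is_ideal_ann[OF module] L(2) ann_contains_I] M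
      unfolding skew_submod_def by auto
    finally show ?thesis .
  qed
  then show ?thesis
    unfolding ES_special_def using is_ideal_\<pi>_image[OF L(1)] by blast
qed

end

lemma complete_injective_hull_exists:
  assumes "complete_regular_local_with m" "injective_hull_residue sc m"
  obtains u where "complete_injective_hull sc m u"
  using assms
  unfolding complete_regular_local_with_def regular_local_with_def injective_hull_residue_def
    complete_injective_hull_def complete_injective_hull_axioms_def injective_hull_def
  by blast

theorem mainTheorem13:
  fixes p :: nat
    and m I L :: "'a::comm_ring_1 set"
    and sc :: "'a \<Rightarrow> 'e::ab_group_add \<Rightarrow> 'e"
    and \<pi> :: "'a \<Rightarrow> 's::comm_ring_1"
    and T :: "'e \<Rightarrow> 'e"
  assumes "prime (p::nat)"
    and "of_nat p = (0::'a)"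
    and "complete_regular_local_with m"
    and "injective_hull_residue sc m"
    and "is_ideal I"
    and "quotient_map \<pi> I"
    and "frob_structure p sc I T"
    and "T_torsion_free sc I T"
    and "is_ideal L"
    and "I \<subseteq> L"
  shows "ES_ideal sc I T L \<longleftrightarrow> ES_special p \<pi> sc I T (\<pi> ` L)"
proof -
  obtain u where "complete_injective_hull sc m u"
    using complete_injective_hull_exists[OF assms(3,4)] .
  then interpret E: complete_injective_hull sc m u .
  interpret F: frobenius_action p \<pi> sc I T
    using E.module assms(6,7) prime_gt_0_nat[OF assms(1)] by unfold_locales
  have "ES_ideal sc I T L \<longleftrightarrow> skew_submod sc I T (annE sc L)"
    by (rule F.ES_ideal_iff[OF assms(9,10)])
  also have "\<dots> \<longleftrightarrow> (\<exists>M. skew_submod sc I T M \<and> ann sc M = L)"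
  proof
    assume "skew_submod sc I T (annE sc L)"
    then show "\<exists>M. skew_submod sc I T M \<and> ann sc M = L"
      using E.ann_annE_ideal[OF assms(9)] by blast
  next
    assume "\<exists>M. skew_submod sc I T M \<and> ann sc M = L"
    then obtain M where "skew_submod sc I T M" "ann sc M = L"
      by blast
    then show "skew_submod sc I T (annE sc L)"
      using E.annE_ann_submod unfolding skew_submod_def by auto
  qed
  also have "\<dots> \<longleftrightarrow> ES_special p \<pi> sc I T (\<pi> ` L)"
    by (rule F.ES_special_iff[OF assms(8-10), symmetric])
  finally show ?thesis .
qed

end
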